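(* Let $\mathcal{D}(\Lambda_{n,d})$ be the Drinfel'd double of $\Lambda_{n,d}$. As a coalgebra it is $\Lambda_{n,d}^{*cop}\otimes\Lambda_{n,d}$; writing its basis elements as $G^iX^j\gamma_\ell^m$ ($i,\ell\in\mathbb{Z}_n$, $0\leqslant j,m\leqslant d-1$, tensor sign omitted), its algebra structure is completely determined by the following relations: $G^n=1$, $X^d=0$, $GX=q^{-1}XG$; the product of elements $\gamma_\ell^m$ is the usual product of paths in $\Lambda_{n,d}$; $\gamma_\ell^mG=q^{-m}G\gamma_\ell^m$; and $$\gamma_\ell^mX=q^{-m}X\gamma_{\ell+1}^m-q^{-m}(m)_q\gamma_{\ell+1}^{m-1}+q^{\ell+1-m}(m)_qG\gamma_{\ell+1}^{m-1}.$$
   Context: $k$ is an algebraically closed field; $n,d$ are integers with $d\geqslant 2$, $d\mid n$, and $\mathrm{char}\,k\nmid n$; $q\in k$ is a fixed primitive $d$-th root of unity. $\Lambda_{n,d}$ is the path algebra over $k$ of the cyclic quiver with vertices $e_0,\dots,e_{n-1}$ (indices in $\mathbb{Z}_n$) and arrows $a_i:e_i\to e_{i+1}$, modulo the ideal generated by all paths of length $d$. Paths are written right to left; $\gamma_i^m=a_{i+m-1}\cdots a_{i+1}a_i$ is the path of length $m$ starting at $e_i$, with $\gamma_i^0=e_i$. $\Lambda_{n,d}$ is a Hopf algebra with $\varepsilon(e_i)=\delta_{i0}$, $\varepsilon(a_i)=0$, $\Delta(e_i)=\sum_{j+\ell=i}e_j\otimes e_\ell$, $\Delta(a_i)=\sum_{j+\ell=i}(e_j\otimes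 a_\ell+q^\ell a_j\otimes e_\ell)$, $S(e_i)=e_{-i}$, $S(a_i)=-q^{i+1}a_{-i-1}$. The Drinfel'd double of a finite-dimensional Hopf algebra $H$ is $H^{*cop}\otimes H$ as a coalgebra, with product $(\alpha\otimes h)(\beta\otimes g)=\alpha\,\beta(S^{-1}h^{(3)}\,?\,h^{(1)})\otimes h^{(2)}g$, where $\beta(S^{-1}h^{(3)}?h^{(1)})$ is $x\mapsto\beta(S^{-1}h^{(3)}xh^{(1)})$ (Sweedler notation). The algebra $\Lambda_{n,d}^{*cop}$ is identified with $\langle G,X\mid G^n=1,X^d=0,GX=q^{-1}XG\rangle$ via $\check e_i\mapsto G^i$, $\check a_i\mapsto G^iX$ (where $\check{}$ denotes the dual basis to the basis of paths), with $\Delta(G)=G\otimes G$, $\Delta(X)=X\otimes G+1\otimes X$. Also $(m)_q=1+q+\cdots+q^{m-1}$, $(0)_q=0$. *)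

theory Defs
  imports "HOL-Computational_Algebra.Polynomial"
begin

text \<open>Basis paths gamma_i^m are indexed by pairs (i,m) in {0..<n} x {0..<d}.
  An element of Lambda is a coefficient function on pairs; an element of the dual
  is given by its values on the basis paths (= coefficients in the dual basis);
  an element of the double H^{*cop} (x) H is a coefficient function on pairs of pairs
  (coefficient of dual-basis-element (x) path).\<close>

type_synonym 'a vec = "nat \<times> nat \<Rightarrow> 'a"
type_synonym 'a ten = "(nat \<times> nat) \<times> (nat \<times> nat) \<Rightarrow> 'a"

definition Bidx :: "nat \<Rightarrow> nat \<Rightarrow> (nat \<times> nat) set" where
  "Bidx n d = {0..<n} \<times> {0..<d}"

definition bv :: "nat \<times> nat \<Rightarrow> 'a::zero_neq_one vec" where
  "bv b = (\<lambda>c. if c = b then 1 else 0)"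

definition Vspace :: "nat \<Rightarrow> nat \<Rightarrow> 'a::zero vec set" where
  "Vspace n d = {x. \<forall>c. c \<notin> Bidx n d \<longrightarrow> x c = 0}"

definition Dspace :: "nat \<Rightarrow> nat \<Rightarrow> 'a::zero ten set" where
  "Dspace n d = {P. \<forall>c. c \<notin> Bidx n d \<times> Bidx n d \<longrightarrow> P c = 0}"

text \<open>Product of basis paths (right to left): gamma_i^s * gamma_j^t.\<close>
definition pathmul :: "nat \<Rightarrow> nat \<Rightarrow> nat \<times> nat \<Rightarrow> nat \<times> nat \<Rightarrow> 'a::field vec" where
  "pathmul n d a b = (if fst a = (fst b + snd b) mod n \<and> snd a + snd b < d
      then bv (fst b, snd a + snd b) else (\<lambda>_. 0))"

definition mulL :: "nat \<Rightarrow> nat \<Rightarrow> 'a::field vec \<Rightarrow> 'a vec \<Rightarrow> 'a vec" where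
  "mulL n d x y = (\<lambda>c. \<Sum>a\<in>Bidx n d. \<Sum>b\<in>Bidx n d. x a * y b * pathmul n d a b c)"

definition oneL :: "nat \<Rightarrow> 'a::field vec" where
  "oneL n = (\<lambda>c. \<Sum>i<n. bv (i, 0) c)"

definition tens :: "'a::field vec \<Rightarrow> 'a vec \<Rightarrow> 'a ten" where
  "tens x y = (\<lambda>c. x (fst c) * y (snd c))"

definition mulT :: "nat \<Rightarrow> nat \<Rightarrow> 'a::field ten \<Rightarrow> 'a ten \<Rightarrow> 'a ten" where
  "mulT n d X Y = (\<lambda>c. \<Sum>p\<in>Bidx n d \<times> Bidx n d. \<Sum>r\<in>Bidx n d \<times> Bidx n d.
      X p * Y r * pathmul n d (fst p) (fst r) (fst c) * pathmul n d (snd p) (snd r) (snd c))"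

definition coE :: "nat \<Rightarrow> nat \<Rightarrow> nat \<Rightarrow> 'a::field ten" where
  "coE n d i = (\<lambda>c. \<Sum>j<n. tens (bv (j, 0)) (bv ((i + n - j) mod n, 0)) c)"

definition coA :: "nat \<Rightarrow> nat \<Rightarrow> 'a::field \<Rightarrow> nat \<Rightarrow> 'a ten" where
  "coA n d q i = (\<lambda>c. \<Sum>j<n. tens (bv (j, 0)) (bv ((i + n - j) mod n, 1)) c
       + q ^ ((i + n - j) mod n) * tens (bv (j, 1)) (bv ((i + n - j) mod n, 0)) c)"

text \<open>Comultiplication on paths, as the algebra map determined by the generators:
  Delta(gamma_i^{m+1}) = Delta(a_{i+m}) Delta(gamma_i^m).\<close>
fun coPath :: "nat \<Rightarrow> nat \<Rightarrow> 'a::field \<Rightarrow> nat \<Rightarrow> nat \<Rightarrow> 'a ten" where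
  "coPath n d q i 0 = coE n d i"
| "coPath n d q i (Suc m) = mulT n d (coA n d q ((i + m) mod n)) (coPath n d q i m)"

text \<open>Coefficient of h1 (x) h2 (x) h3 in (Delta (x) id) Delta (gamma_h).\<close>
definition co3 :: "nat \<Rightarrow> nat \<Rightarrow> 'a::field \<Rightarrow> nat \<times> nat \<Rightarrow> nat \<times> nat \<Rightarrow> nat \<times> nat \<Rightarrow> nat \<times> nat \<Rightarrow> 'a" where
  "co3 n d q h h1 h2 h3 = (\<Sum>c\<in>Bidx n d. coPath n d q (fst h) (snd h) (c, h3) * coPath n d q (fst c) (snd c) (h1, h2))"

definition negm :: "nat \<Rightarrow> nat \<Rightarrow> nat" where
  "negm n i = (n - i mod n) mod n"

text \<open>Antipode on paths, as the anti-algebra map determined by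
  S(e_i) = e_{-i}, S(a_i) = - q^{i+1} a_{-i-1}.\<close>
fun Spath :: "nat \<Rightarrow> nat \<Rightarrow> 'a::field \<Rightarrow> nat \<Rightarrow> nat \<Rightarrow> 'a vec" where
  "Spath n d q i 0 = bv (negm n i, 0)"
| "Spath n d q i (Suc m) = mulL n d (Spath n d q i m)
      (\<lambda>c. - (q ^ Suc ((i + m) mod n)) * bv (negm n (Suc ((i + m) mod n)), 1) c)"

definition Slin :: "nat \<Rightarrow> nat \<Rightarrow> 'a::field \<Rightarrow> 'a vec \<Rightarrow> 'a vec" where
  "Slin n d q x = (\<lambda>c. \<Sum>b\<in>Bidx n d. x b * Spath n d q (fst b) (snd b) c)"

definition Sinv :: "nat \<Rightarrow> nat \<Rightarrow> 'a::field \<Rightarrow> 'a vec \<Rightarrow> 'a vec" where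
  "Sinv n d q x = (THE y. y \<in> Vspace n d \<and> Slin n d q y = x)"

text \<open>Product in H^{*} (dual to Delta): (f g)(x) = f(x1) g(x2).\<close>
definition conv :: "nat \<Rightarrow> nat \<Rightarrow> 'a::field \<Rightarrow> 'a vec \<Rightarrow> 'a vec \<Rightarrow> 'a vec" where
  "conv n d q f g = (\<lambda>x. if x \<in> Bidx n d then
      (\<Sum>p\<in>Bidx n d \<times> Bidx n d. coPath n d q (fst x) (snd x) p * f (fst p) * g (snd p)) else 0)"

text \<open>Drinfel'd double product of basis tensors (dual(b) (x) h)(dual(b') (x) g) =
  dual(b) * b'(S^{-1} h3 ? h1) (x) h2 g.\<close>
definition dbprod :: "nat \<Rightarrow> nat \<Rightarrow> 'a::field \<Rightarrow> nat \<times> nat \<Rightarrow> nat \<times> nat \<Rightarrow> nat \<times> nat \<Rightarrow> nat \<times> nat \<Rightarrow> 'a ten" where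
  "dbprod n d q b h b' g = (\<lambda>c. \<Sum>h1\<in>Bidx n d. \<Sum>h2\<in>Bidx n d. \<Sum>h3\<in>Bidx n d.
      co3 n d q h h1 h2 h3
      * conv n d q (bv b) (\<lambda>x. mulL n d (mulL n d (Sinv n d q (bv h3)) (bv x)) (bv h1) b') (fst c)
      * mulL n d (bv h2) (bv g) (snd c))"

definition mulD :: "nat \<Rightarrow> nat \<Rightarrow> 'a::field \<Rightarrow> 'a ten \<Rightarrow> 'a ten \<Rightarrow> 'a ten" where
  "mulD n d q P Q = (\<lambda>c. \<Sum>p\<in>Bidx n d \<times> Bidx n d. \<Sum>r\<in>Bidx n d \<times> Bidx n d.
      P p * Q r * dbprod n d q (fst p) (snd p) (fst r) (snd r) c)"

text \<open>Unit of the double: epsilon (x) 1, with epsilon = dual(e_0).\<close>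
definition oneD :: "nat \<Rightarrow> 'a::field ten" where
  "oneD n = tens (bv (0, 0)) (oneL n)"

fun powD :: "nat \<Rightarrow> nat \<Rightarrow> 'a::field \<Rightarrow> 'a ten \<Rightarrow> nat \<Rightarrow> 'a ten" where
  "powD n d q P 0 = oneD n"
| "powD n d q P (Suc k) = mulD n d q P (powD n d q P k)"

text \<open>G = dual(e_1) (x) 1, X = dual(a_0) (x) 1, gamma_l^m = epsilon (x) gamma_l^m.\<close>
definition Gd :: "nat \<Rightarrow> 'a::field ten" where
  "Gd n = tens (bv (1, 0)) (oneL n)"

definition Xd :: "nat \<Rightarrow> 'a::field ten" where
  "Xd n = tens (bv (0, 1)) (oneL n)"

definition gamD :: "nat \<Rightarrow> nat \<Rightarrow> nat \<Rightarrow> 'a::field ten" where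
  "gamD n l m = tens (bv (0, 0)) (bv (l mod n, m))"

definition qint :: "'a::field \<Rightarrow> nat \<Rightarrow> 'a" where
  "qint q m = (\<Sum>i<m. q ^ i)"

definition basisD :: "nat \<Rightarrow> nat \<Rightarrow> 'a::field \<Rightarrow> nat \<times> nat \<times> nat \<times> nat \<Rightarrow> 'a ten" where
  "basisD n d q idx = (case idx of (i, j, l, m) \<Rightarrow>
      mulD n d q (mulD n d q (powD n d q (Gd n) i) (powD n d q (Xd n) j)) (gamD n l m))"

end

theory Submission
  imports Defs "HOL-Number_Theory.Cong"
begin

(* Everything is computed in the path basis. Since Delta(gamma_i^(m+1)) = Delta(a_(i+m)) Delta(gamma_i^m),
  induction on m together with the q-Pascal rule gives the closed form
  Delta(gamma_i^m) = sum of binom(m,s)_q q^(s f') gamma_f^s (x) gamma_f'^(m-s) over f + f' = i,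
  and S(gamma_i^m) is a nonzero multiple of gamma_(-i-m)^m, so S^-1 is explicit as well.
  Feeding these into the product of the double, only a handful of terms survive. Multiplying
  on the left by H^* (x) 1 is just the product of H^*, which gives the relations among G and X and
  G^i X^j gamma = (j)_q! (dual of gamma_i^j) (x) gamma; as (j)_q! is nonzero for primitive q these
  elements form a basis. In gamma_l^m G and gamma_l^m X the coefficient b'(S^-1(h3) ? h1) vanishes
  except for h3 = e_(-1) or a_(-1), which produces the powers q^-m and the three terms of the
  last relation. *)

section \<open>The path algebra\<close>

lemma Bidx_iff [simp]: "(a, b) \<in> Bidx n d \<longleftrightarrow> a < n \<and> b < d"
  by (simp add: Bidx_def)

lemma finite_Bidx [simp]: "finite (Bidx n d)"
  by (simp add: Bidx_def)

lemma if_one_zero_mult [simp]: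
  "(if P then 1 else 0) * y = (if P then y else (0::'a::semiring_1))"
  "y * (if P then 1 else 0) = (if P then y else (0::'a::semiring_1))"
  by simp_all

lemma sum_bv_mult:
  assumes "finite A"
  shows "(\<Sum>x\<in>A. bv b x * f x) = (if b \<in> A then f b else (0::'a::semiring_1))"
proof -
  have "(\<Sum>x\<in>A. bv b x * f x) = (\<Sum>x\<in>A. if x = b then f x else 0)"
    by (rule sum.cong) (auto simp: bv_def)
  then show ?thesis using assms by (simp add: sum.delta)
qed

lemma sum_mult_bv:
  assumes "finite A"
  shows "(\<Sum>x\<in>A. f x * bv b x) = (if b \<in> A then f b else (0::'a::semiring_1))"
proof -
  have "(\<Sum>x\<in>A. f x * bv b x) = (\<Sum>x\<in>A. if x = b then f x else 0)"
    by (rule sum.cong) (auto simp: bv_def)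
  then show ?thesis using assms by (simp add: sum.delta)
qed

lemma sum_mult_if_eq_conj:
  "finite A \<Longrightarrow> (\<Sum>x\<in>A. g x * (if x = a \<and> P then f x else 0))
      = (if a \<in> A \<and> P then g a * f a else (0::'a::semiring_0))"
  by (cases P) (auto simp: if_distrib sum.delta cong: if_cong)

lemma sum3_delta:
  assumes "finite A" "finite B" "finite C" "a \<in> A" "c \<in> C"
  shows "(\<Sum>x\<in>A. \<Sum>y\<in>B. \<Sum>z\<in>C. if x = a \<and> z = c then F x y z else 0) = (\<Sum>y\<in>B. F a y c)"
proof -
  have "(\<Sum>x\<in>A. \<Sum>y\<in>B. \<Sum>z\<in>C. if x = a \<and> z = c then F x y z else 0)
      = (\<Sum>x\<in>A. \<Sum>y\<in>B. if x = a then F x y c else 0)"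
  proof (intro sum.cong refl)
    fix x y
    have "(\<Sum>z\<in>C. if x = a \<and> z = c then F x y z else 0) = (\<Sum>z\<in>C. if z = c then (if x = a then F x y z else 0) else 0)"
      by (intro sum.cong refl) auto
    also have "\<dots> = (if x = a then F x y c else 0)" using assms by (simp add: sum.delta)
    finally show "(\<Sum>z\<in>C. if x = a \<and> z = c then F x y z else 0) = (if x = a then F x y c else 0)" .
  qed
  also have "\<dots> = (\<Sum>x\<in>A. if x = a then (\<Sum>y\<in>B. F x y c) else 0)"
    by (intro sum.cong refl) auto
  also have "\<dots> = (\<Sum>y\<in>B. F a y c)" using assms by (simp add: sum.delta)
  finally show ?thesis .
qed

lemma sum3_cong:
  assumes "\<And>x y z. x \<in> A \<Longrightarrow> y \<in> B \<Longrightarrow> z \<in> C \<Longrightarrow> F x y z = G x y z"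
  shows "(\<Sum>x\<in>A. \<Sum>y\<in>B. \<Sum>z\<in>C. F x y z) = (\<Sum>x\<in>A. \<Sum>y\<in>B. \<Sum>z\<in>C. G x y z)"
  using assms by (intro sum.cong refl) auto

lemma bv_in_Vspace: "b \<in> Bidx n d \<Longrightarrow> bv b \<in> Vspace n d"
  by (auto simp: Vspace_def bv_def)

lemma sum_Vspace_bv:
  assumes "(y :: 'a::field vec) \<in> Vspace n d"
  shows "(\<Sum>r\<in>Bidx n d. y r * bv r z) = y z"
proof -
  have "(\<Sum>r\<in>Bidx n d. y r * bv r z) = (\<Sum>r\<in>Bidx n d. y r * bv z r)"
    by (rule sum.cong) (auto simp: bv_def)
  then show ?thesis using assms by (cases z) (simp add: sum_mult_bv Vspace_def)
qed

lemma oneL_apply: "oneL n (k, s) = (if k < n \<and> s = 0 then 1 else 0)"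
proof -
  have "oneL n (k, s) = (\<Sum>i<n. if i = k then (if s = 0 then 1 else 0) else 0)"
    unfolding oneL_def bv_def by (intro sum.cong refl) auto
  also have "\<dots> = (if k < n \<and> s = 0 then 1 else 0)" by (simp add: sum.delta)
  finally show ?thesis .
qed

lemma oneL_in_Vspace: "0 < d \<Longrightarrow> oneL n \<in> Vspace n d"
  unfolding Vspace_def by (auto simp: oneL_apply)

lemma tens_scale_left: "tens (\<lambda>x. k * f x) y = (\<lambda>c. k * tens f y c)"
  by (simp add: tens_def algebra_simps)

lemma mulL_bv:
  assumes "a \<in> Bidx n d" "b \<in> Bidx n d"
  shows "mulL n d (bv a) (bv b) = pathmul n d a b"
  using assms by (simp add: mulL_def mult.assoc sum_distrib_left[symmetric] sum_bv_mult)

lemma mulL_scale_left: "mulL n d (\<lambda>c. k * x c) y = (\<lambda>c. k * mulL n d x y c)"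
  by (simp add: mulL_def sum_distrib_left mult.assoc)

lemma mulL_zero_left: "mulL n d (\<lambda>_. 0) y = (\<lambda>_. 0)"
  by (simp add: mulL_def)

lemma mulL_scale_right: "mulL n d x (\<lambda>c. k * y c) = (\<lambda>c. k * mulL n d x y c)"
  by (simp add: mulL_def sum_distrib_left algebra_simps)

(* Paths compose right to left: pathmul a b is gamma_c exactly when b is a right factor of c
  and a is its complementary left factor path_cofactor n b c. *)
definition right_factor :: "nat \<Rightarrow> nat \<times> nat \<Rightarrow> nat \<times> nat \<Rightarrow> bool" where
  "right_factor d b c \<longleftrightarrow> fst c = fst b \<and> snd b \<le> snd c \<and> snd c < d"

definition path_cofactor :: "nat \<Rightarrow> nat \<times> nat \<Rightarrow> nat \<times> nat \<Rightarrow> nat \<times> nat" where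
  "path_cofactor n b c = ((fst b + snd b) mod n, snd c - snd b)"

lemma pathmul_eq:
  "pathmul n d a b c = (if a = path_cofactor n b c \<and> right_factor d b c then 1 else 0)"
  by (cases a; cases b; cases c) (auto simp: pathmul_def bv_def path_cofactor_def right_factor_def)

lemma sum_pathmul_left:
  assumes "0 < n"
  shows "(\<Sum>a\<in>Bidx n d. f a * pathmul n d a b c) =
    (if right_factor d b c then f (path_cofactor n b c) else 0)"
proof -
  have mem: "right_factor d b c \<Longrightarrow> path_cofactor n b c \<in> Bidx n d"
    using assms by (cases b; cases c) (auto simp: path_cofactor_def right_factor_def)
  have "(\<Sum>a\<in>Bidx n d. f a * pathmul n d a b c) =
      (\<Sum>a\<in>Bidx n d. if a = path_cofactor n b c then (if right_factor d b c then f a else 0) else 0)"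
    by (rule sum.cong) (auto simp: pathmul_eq)
  also have "\<dots> = (if right_factor d b c then f (path_cofactor n b c) else 0)"
    using mem by (simp only: sum.delta finite_Bidx) auto
  finally show ?thesis .
qed

lemma mulT_eq:
  assumes "0 < n"
  shows "mulT n d X Y c = (\<Sum>r\<in>Bidx n d \<times> Bidx n d. Y r *
     (if right_factor d (fst r) (fst c) \<and> right_factor d (snd r) (snd c)
      then X (path_cofactor n (fst r) (fst c), path_cofactor n (snd r) (snd c)) else 0))"
proof -
  have "mulT n d X Y c = (\<Sum>r\<in>Bidx n d \<times> Bidx n d. \<Sum>p\<in>Bidx n d \<times> Bidx n d.
      X p * Y r * pathmul n d (fst p) (fst r) (fst c) * pathmul n d (snd p) (snd r) (snd c))"
    unfolding mulT_def by (rule sum.swap)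
  also have "\<dots> = (\<Sum>r\<in>Bidx n d \<times> Bidx n d. Y r *
     (if right_factor d (fst r) (fst c) \<and> right_factor d (snd r) (snd c)
      then X (path_cofactor n (fst r) (fst c), path_cofactor n (snd r) (snd c)) else 0))"
  proof (intro sum.cong refl)
    fix r :: "(nat \<times> nat) \<times> nat \<times> nat"
    let ?C1 = "right_factor d (fst r) (fst c)" and ?C2 = "right_factor d (snd r) (snd c)"
    have "(\<Sum>p\<in>Bidx n d \<times> Bidx n d. X p * Y r * pathmul n d (fst p) (fst r) (fst c) * pathmul n d (snd p) (snd r) (snd c))
      = Y r * (\<Sum>p1\<in>Bidx n d. (\<Sum>p2\<in>Bidx n d. (X (p1, p2) * pathmul n d p1 (fst r) (fst c)) * pathmul n d p2 (snd r) (snd c)))"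
      unfolding sum.cartesian_product by (simp add: split_def sum_distrib_left algebra_simps)
    also have "\<dots> = Y r * (\<Sum>p1\<in>Bidx n d. (if ?C2 then X (p1, path_cofactor n (snd r) (snd c)) else 0) * pathmul n d p1 (fst r) (fst c))"
      by (intro arg_cong[where f="\<lambda>x. Y r * x"] sum.cong refl) (simp add: sum_pathmul_left[OF assms])
    also have "\<dots> = Y r * (if ?C1 \<and> ?C2 then X (path_cofactor n (fst r) (fst c), path_cofactor n (snd r) (snd c)) else 0)"
      using sum_pathmul_left[OF assms, of "\<lambda>p1. X (p1, path_cofactor n (snd r) (snd c))" d "fst r" "fst c"]
      by (cases ?C2) simp_all
    finally show "(\<Sum>p\<in>Bidx n d \<times> Bidx n d. X p * Y r * pathmul n d (fst p) (fst r) (fst c) * pathmul n d (snd p) (snd r) (snd c)) =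
      Y r * (if ?C1 \<and> ?C2 then X (path_cofactor n (fst r) (fst c), path_cofactor n (snd r) (snd c)) else 0)" .
  qed
  finally show ?thesis .
qed

lemma mod_add_left_cancel_less: "(y::nat) < n \<Longrightarrow> z < n \<Longrightarrow> (a + y) mod n = (a + z) mod n \<Longrightarrow> y = z"
  using cong_add_lcancel_nat[of a y z n] by (simp add: cong_def)

lemma eq_mod_diff_iff:
  assumes "(a::nat) < n" "y < n"
  shows "y = (i + n - a) mod n \<longleftrightarrow> (a + y) mod n = i mod n"
proof
  assume "y = (i + n - a) mod n"
  then show "(a + y) mod n = i mod n" using assms by (simp add: mod_add_right_eq)
next
  assume h: "(a + y) mod n = i mod n"
  have "(a + (i + n - a) mod n) mod n = i mod n" using assms by (simp add: mod_add_right_eq)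
  then show "y = (i + n - a) mod n" using h assms by (intro mod_add_left_cancel_less[of y n "(i + n - a) mod n" a]) auto
qed

lemma Suc_mod_eq_Suc_mod_iff: "Suc x mod n = Suc y mod n \<longleftrightarrow> x mod n = y mod n"
  using cong_add_rcancel_nat[of x 1 y n] by (simp add: cong_def)

lemma negm_lt: "0 < n \<Longrightarrow> negm n x < n"
  by (simp add: negm_def)

lemma negm_eq_iff:
  assumes "0 < n" "z < n"
  shows "z = negm n x \<longleftrightarrow> (x + z) mod n = 0"
proof -
  have "z = negm n x \<longleftrightarrow> z = (0 + n - x mod n) mod n" by (simp add: negm_def)
  also have "\<dots> \<longleftrightarrow> (x mod n + z) mod n = 0 mod n" using assms by (intro eq_mod_diff_iff) auto
  also have "\<dots> \<longleftrightarrow> (x + z) mod n = 0" by (simp add: mod_add_left_eq)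
  finally show ?thesis .
qed

lemma negm_0: "negm n 0 = 0"
  by (simp add: negm_def)

lemma negm_self: "negm n n = 0"
  by (simp add: negm_def)

lemma negm_Suc_mod: "negm n (Suc (x mod n)) = negm n (Suc x)"
  by (simp add: negm_def mod_Suc_eq)

lemma negm_Suc_add_1: "0 < n \<Longrightarrow> (negm n (Suc x) + 1) mod n = negm n x"
  using negm_eq_iff[of n "(negm n (Suc x) + 1) mod n" x] negm_eq_iff[of n "negm n (Suc x)" "Suc x"]
  by (simp add: negm_lt mod_add_right_eq add.assoc)

section \<open>Gaussian binomial coefficients\<close>

lemma qint_Suc: "qint q (Suc k) = 1 + q * qint q k"
  unfolding qint_def by (subst sum.lessThan_Suc_shift) (simp add: sum_distrib_left)

lemma qint_nonzero:
  assumes "\<forall>k. 0 < k \<and> k < d \<longrightarrow> q ^ k \<noteq> 1" "0 < t" "t < d"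
  shows "qint q t \<noteq> 0"
  using assms one_diff_power_eq[of q t] unfolding qint_def by fastforce

fun qbinom :: "'a::field \<Rightarrow> nat \<Rightarrow> nat \<Rightarrow> 'a" where
  "qbinom q 0 k = (if k = 0 then 1 else 0)"
| "qbinom q (Suc m) 0 = 1"
| "qbinom q (Suc m) (Suc k) = q ^ (m - k) * qbinom q m k + qbinom q m (Suc k)"

lemma qbinom_eq_0: "m < k \<Longrightarrow> qbinom q m k = 0"
proof (induction m arbitrary: k)
  case (Suc m)
  then show ?case by (cases k) auto
qed simp

lemma qbinom_0 [simp]: "qbinom q m 0 = 1"
  by (cases m) auto

lemma qbinom_self [simp]: "qbinom q m m = 1"
  by (induction m) (auto simp: qbinom_eq_0)

lemma qbinom_1: "qbinom q m 1 = qint q m"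
  by (induction m) (auto simp: qint_def)

lemma qbinom_Suc_self: "qbinom q (Suc m) m = qint q (Suc m)"
proof (induction m)
  case (Suc m)
  then show ?case by (simp add: qint_Suc[of q "Suc m"] algebra_simps)
qed (simp add: qint_def)

lemma qbinom_Suc_split:
  assumes "s1 + s2 = Suc m"
  shows "qbinom q (Suc m) s1 = (if 1 \<le> s2 then qbinom q m s1 else 0)
    + (if 1 \<le> s1 then q ^ s2 * qbinom q m (s1 - 1) else 0)"
proof (cases s1)
  case (Suc k)
  then have "s2 = m - k" "k \<le> m" using assms by auto
  then show ?thesis using Suc by (cases "s2 = 0") (auto simp: qbinom_eq_0)
qed (use assms in simp)

fun qfact :: "'a::field \<Rightarrow> nat \<Rightarrow> 'a" where
  "qfact q 0 = 1"
| "qfact q (Suc j) = qint q (Suc j) * qfact q j"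

lemma qfact_nonzero:
  assumes "\<forall>k. 0 < k \<and> k < d \<longrightarrow> q ^ k \<noteq> 1" "j < d"
  shows "qfact q j \<noteq> 0"
  using assms(2) by (induction j) (auto simp: qint_nonzero[OF assms(1)])

lemma coE_apply:
  "coE n d i ((a1, s1), (a2, s2)) = (if a1 < n \<and> a2 < n \<and> s1 = 0 \<and> s2 = 0 \<and> (a1 + a2) mod n = i mod n then 1 else 0)"
proof -
  have "coE n d i ((a1, s1), (a2, s2)) = (\<Sum>j<n. if j = a1 then (if s1 = 0 \<and> s2 = 0 \<and> a2 = (i + n - j) mod n then 1 else 0) else 0)"
    unfolding coE_def tens_def bv_def by (intro sum.cong refl) auto
  also have "\<dots> = (if a1 < n \<and> s1 = 0 \<and> s2 = 0 \<and> a2 = (i + n - a1) mod n then 1 else 0)"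
    by (simp add: sum.delta)
  finally show ?thesis using eq_mod_diff_iff[of a1 n a2 i] by auto
qed

lemma coA_apply:
  "coA n d q i ((a1, u1), (a2, u2)) =
     (if a1 < n \<and> a2 < n \<and> (a1 + a2) mod n = i mod n \<and> u1 = 0 \<and> u2 = 1 then 1 else 0)
   + (if a1 < n \<and> a2 < n \<and> (a1 + a2) mod n = i mod n \<and> u1 = 1 \<and> u2 = 0 then q ^ a2 else 0)"
proof -
  have "coA n d q i ((a1, u1), (a2, u2)) = (\<Sum>j<n. if j = a1 then (if a2 = (i + n - j) mod n then
     (if u1 = 0 \<and> u2 = 1 then 1 else if u1 = 1 \<and> u2 = 0 then q ^ a2 else 0) else 0) else 0)"
    unfolding coA_def tens_def bv_def by (intro sum.cong refl) auto
  then show ?thesis using eq_mod_diff_iff[of a1 n a2 i] by (auto simp: sum.delta)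
qed

fun antipode_coeff :: "nat \<Rightarrow> 'a::field \<Rightarrow> nat \<Rightarrow> nat \<Rightarrow> 'a" where
  "antipode_coeff n q i 0 = 1"
| "antipode_coeff n q i (Suc m) = antipode_coeff n q i m * (- (q ^ Suc ((i + m) mod n)))"

lemma antipode_coeff_nonzero: "q \<noteq> 0 \<Longrightarrow> antipode_coeff n q i m \<noteq> 0"
  by (induction m) auto

(* Primitivity of q is only needed for the basis, so it is not an assumption of the locale. *)
locale cyclic_double =
  fixes n d :: nat and q :: "'a::field"
  assumes d_ge_2: "2 \<le> d" and d_le_n: "d \<le> n" and q_pow_n: "q ^ n = 1"
begin

lemma d_pos: "0 < d"
  using d_ge_2 by simp

lemma n_ge_2: "2 \<le> n"
  using d_ge_2 d_le_n by simp

lemma n_pos: "0 < n"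
  using n_ge_2 by simp

lemma q_nonzero: "q \<noteq> 0"
  using q_pow_n n_pos by (metis power_0_left less_not_refl2 zero_neq_one)

lemma power_mod_n: "q ^ (x mod n) = q ^ x"
proof -
  have "q ^ x = q ^ (n * (x div n) + x mod n)" by simp
  also have "\<dots> = q ^ (x mod n)" by (simp only: power_add power_mult q_pow_n) simp
  finally show ?thesis by simp
qed

lemma negm_1: "negm n 1 = n - 1"
  using n_ge_2 by (simp add: negm_def)

subsection \<open>Comultiplication\<close>

(* Coefficient of gamma_c1 (x) gamma_c2 in Delta(gamma_i^m). *)
definition copath_coeff :: "nat \<Rightarrow> nat \<Rightarrow> nat \<times> nat \<Rightarrow> nat \<times> nat \<Rightarrow> 'a" where
  "copath_coeff i m c1 c2 = (if c1 \<in> Bidx n d \<and> c2 \<in> Bidx n d \<and> snd c1 + snd c2 = m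
     \<and> (fst c1 + fst c2) mod n = i mod n then qbinom q m (snd c1) * q ^ (snd c1 * fst c2) else 0)"

lemma coA_cofactor_terms:
  assumes "g1 < n" "g2 < n"
  shows "(if right_factor d (g1, t1) (f1, s1) \<and> right_factor d (g2, t2) (f2, s2)
      then coA n d q j (path_cofactor n (g1, t1) (f1, s1), path_cofactor n (g2, t2) (f2, s2)) else 0)
    = (if ((g1, t1), (g2, t2)) = ((f1, s1), (f2, s2 - 1)) \<and> 1 \<le> s2 \<and>
          f1 < n \<and> f2 < n \<and> s1 < d \<and> s2 < d \<and> (f1 + f2 + s1 + s2) mod n = Suc j mod n then 1 else 0)
    + (if ((g1, t1), (g2, t2)) = ((f1, s1 - 1), (f2, s2)) \<and> 1 \<le> s1 \<and>
          f1 < n \<and> f2 < n \<and> s1 < d \<and> s2 < d \<and> (f1 + f2 + s1 + s2) mod n = Suc j mod n then q ^ (f2 + s2) else 0)"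
  (is "?lhs = (if ?r1 \<and> _ \<and> ?C then _ else _) + (if ?r2 \<and> _ then _ else _)")
proof -
  let ?R = "right_factor d (g1, t1) (f1, s1) \<and> right_factor d (g2, t2) (f2, s2)"
  let ?M = "(f1 + t1 + (f2 + t2)) mod n = j mod n"
  have shift: "(f1 + f2 + s1 + s2) mod n = Suc j mod n \<longleftrightarrow> (f1 + t1' + (f2 + t2')) mod n = j mod n"
    if "t1' + t2' + 1 = s1 + s2" for t1' t2'
  proof -
    have "f1 + f2 + s1 + s2 = Suc (f1 + t1' + (f2 + t2'))" using that by simp
    then show ?thesis by (simp only: Suc_mod_eq_Suc_mod_iff)
  qed
  have "?lhs = (if ?R \<and> s1 - t1 = 0 \<and> s2 - t2 = 1 \<and> ?M then 1 else 0)
      + (if ?R \<and> s1 - t1 = 1 \<and> s2 - t2 = 0 \<and> ?M then q ^ (f2 + s2) else 0)"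
    using n_pos assms by (auto simp: coA_apply path_cofactor_def right_factor_def mod_add_eq power_mod_n)
  moreover have "?R \<and> s1 - t1 = 0 \<and> s2 - t2 = 1 \<and> ?M \<longleftrightarrow> ?r1 \<and> 1 \<le> s2 \<and> ?C"
  proof (cases "?r1 \<and> 1 \<le> s2 \<and> s1 < d \<and> s2 < d")
    case True
    then have "?R \<and> s1 - t1 = 0 \<and> s2 - t2 = 1" "?M \<longleftrightarrow> ?C"
      using assms shift[of s1 "s2 - 1"] by (auto simp: right_factor_def)
    then show ?thesis using True by simp
  next
    case False
    then have "\<not> (?R \<and> s1 - t1 = 0 \<and> s2 - t2 = 1)" by (auto simp: right_factor_def)
    then show ?thesis using False by blast
  qed
  moreover have "?R \<and> s1 - t1 = 1 \<and> s2 - t2 = 0 \<and> ?M \<longleftrightarrow> ?r2 \<and> 1 \<le> s1 \<and> ?C"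
  proof (cases "?r2 \<and> 1 \<le> s1 \<and> s1 < d \<and> s2 < d")
    case True
    then have "?R \<and> s1 - t1 = 1 \<and> s2 - t2 = 0" "?M \<longleftrightarrow> ?C"
      using assms shift[of "s1 - 1" s2] by (auto simp: right_factor_def)
    then show ?thesis using True by simp
  next
    case False
    then have "\<not> (?R \<and> s1 - t1 = 1 \<and> s2 - t2 = 0)" by (auto simp: right_factor_def)
    then show ?thesis using False by blast
  qed
  ultimately show ?thesis by (simp only:)
qed

lemma mulT_coA_left:
  "mulT n d (coA n d q j) Y ((f1, s1), (f2, s2)) =
    (if f1 < n \<and> f2 < n \<and> s1 < d \<and> s2 < d \<and> (f1 + f2 + s1 + s2) mod n = Suc j mod n
     then (if 1 \<le> s2 then Y ((f1, s1), (f2, s2 - 1)) else 0)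
        + (if 1 \<le> s1 then q ^ (f2 + s2) * Y ((f1, s1 - 1), (f2, s2)) else 0)
     else 0)"
  (is "_ = (if ?C then _ else _)")
proof -
  let ?r1 = "((f1, s1), (f2, s2 - 1))" and ?r2 = "((f1, s1 - 1), (f2, s2))"
  let ?T1 = "\<lambda>r. Y r * (if r = ?r1 \<and> 1 \<le> s2 \<and> ?C then 1 else 0)"
  let ?T2 = "\<lambda>r. Y r * (if r = ?r2 \<and> 1 \<le> s1 \<and> ?C then q ^ (f2 + s2) else 0)"
  have "mulT n d (coA n d q j) Y ((f1, s1), (f2, s2)) = (\<Sum>r\<in>Bidx n d \<times> Bidx n d. ?T1 r + ?T2 r)"
    unfolding mulT_eq[OF n_pos] fst_conv snd_conv
  proof (intro sum.cong refl)
    fix r :: "(nat \<times> nat) \<times> nat \<times> nat"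
    assume "r \<in> Bidx n d \<times> Bidx n d"
    moreover obtain g1 t1 g2 t2 where r: "r = ((g1, t1), (g2, t2))" by (metis prod.collapse)
    ultimately have "g1 < n" "g2 < n" by simp_all
    note terms = coA_cofactor_terms[OF this, of t1 f1 s1 t2 f2 s2 j]
    show "Y r * (if right_factor d (fst r) (f1, s1) \<and> right_factor d (snd r) (f2, s2)
        then coA n d q j (path_cofactor n (fst r) (f1, s1), path_cofactor n (snd r) (f2, s2)) else 0)
      = ?T1 r + ?T2 r"
      unfolding r fst_conv snd_conv terms by (rule distrib_left)
  qed
  also have "\<dots> = (if ?C then (if 1 \<le> s2 then Y ?r1 else 0) + (if 1 \<le> s1 then q ^ (f2 + s2) * Y ?r2 else 0) else 0)"
    by (simp only: sum.distrib sum_mult_if_eq_conj finite_SigmaI finite_Bidx) (auto simp: mult.commute)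
  finally show ?thesis .
qed

lemma coPath_eq: "m < d \<Longrightarrow> coPath n d q i m c = copath_coeff i m (fst c) (snd c)"
proof (induction m arbitrary: c)
  case 0
  obtain a1 s1 a2 s2 where "c = ((a1, s1), (a2, s2))" by (metis prod.collapse)
  then show ?case using d_pos by (auto simp: coE_apply copath_coeff_def)
next
  case (Suc m)
  obtain f1 s1 f2 s2 where c: "c = ((f1, s1), (f2, s2))" by (metis prod.collapse)
  let ?C = "f1 < n \<and> f2 < n \<and> s1 < d \<and> s2 < d \<and> (f1 + f2 + s1 + s2) mod n = Suc ((i + m) mod n) mod n"
  let ?A = "if 1 \<le> s2 then copath_coeff i m (f1, s1) (f2, s2 - 1) else 0"
  let ?B = "if 1 \<le> s1 then q ^ (f2 + s2) * copath_coeff i m (f1, s1 - 1) (f2, s2) else 0"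
  have "coPath n d q i (Suc m) c = (if ?C then ?A + ?B else 0)"
    using Suc by (simp add: c mulT_coA_left)
  also have "\<dots> = copath_coeff i (Suc m) (f1, s1) (f2, s2)"
  proof (cases "f1 < n \<and> f2 < n \<and> s1 < d \<and> s2 < d \<and> s1 + s2 = Suc m \<and> (f1 + f2) mod n = i mod n")
    case True
    then have "(f1 + f2 + s1 + s2) mod n = Suc ((i + m) mod n) mod n"
      by (metis add.assoc add_Suc_right mod_Suc_eq mod_add_left_eq)
    moreover have "?A = (if 1 \<le> s2 then qbinom q m s1 else 0) * q ^ (s1 * f2)"
      using True by (auto simp: copath_coeff_def)
    moreover have "?B = (if 1 \<le> s1 then q ^ s2 * qbinom q m (s1 - 1) else 0) * q ^ (s1 * f2)"
    proof (cases s1)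
      case (Suc k)
      then have "q ^ (f2 + s2) * q ^ (k * f2) = q ^ s2 * q ^ (s1 * f2)"
        by (simp add: power_add[symmetric] algebra_simps)
      then show ?thesis using True Suc by (auto simp: copath_coeff_def algebra_simps)
    qed simp
    ultimately show ?thesis
      using True qbinom_Suc_split[of s1 s2 m q] by (simp add: copath_coeff_def distrib_right)
  next
    case False
    then have "?C \<Longrightarrow> ?A = 0" "?C \<Longrightarrow> ?B = 0"
      by (auto simp: copath_coeff_def)
    then show ?thesis using False by (auto simp: copath_coeff_def)
  qed
  finally show ?case by (simp add: c)
qed

subsection \<open>Antipode\<close>

lemma Spath_eq: "m < d \<Longrightarrow> Spath n d q i m = (\<lambda>c. antipode_coeff n q i m * bv (negm n (i + m), m) c)"
proof (induction m)
  case 0 then show ?case by (simp add: bv_def)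
next
  case (Suc m)
  have u: "(negm n (i + m), m) \<in> Bidx n d" using Suc.prems negm_lt[OF n_pos] by simp
  have v: "(negm n (Suc ((i + m) mod n)), 1) \<in> Bidx n d" using d_ge_2 negm_lt[OF n_pos] by simp
  have pm: "pathmul n d (negm n (i + m), m) (negm n (Suc ((i + m) mod n)), 1) = bv (negm n (i + Suc m), Suc m)"
    using Suc.prems negm_Suc_add_1[OF n_pos, of "i + m"] by (simp add: pathmul_def negm_Suc_mod)
  have "Spath n d q i (Suc m) = mulL n d (\<lambda>c. antipode_coeff n q i m * bv (negm n (i + m), m) c)
      (\<lambda>c. - (q ^ Suc ((i + m) mod n)) * bv (negm n (Suc ((i + m) mod n)), 1) c)"
    using Suc by simp
  also have "\<dots> = (\<lambda>c. antipode_coeff n q i (Suc m) * bv (negm n (i + Suc m), Suc m) c)"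
    by (simp only: mulL_scale_left mulL_scale_right mulL_bv[OF u v] pm) (simp add: algebra_simps)
  finally show ?case .
qed

definition antipode_index :: "nat \<times> nat \<Rightarrow> nat \<times> nat" where
  "antipode_index b = (negm n (fst b + snd b), snd b)"

lemma antipode_index_eq_iff:
  assumes "b \<in> Bidx n d" "(t, k) \<in> Bidx n d"
  shows "antipode_index b = (t, k) \<longleftrightarrow> b = (negm n (t + k), k)"
proof -
  obtain b1 k' where b: "b = (b1, k')" by fastforce
  have "antipode_index b = (t, k) \<longleftrightarrow> k' = k \<and> t = negm n (b1 + k)" using b by (auto simp: antipode_index_def)
  also have "\<dots> \<longleftrightarrow> k' = k \<and> (b1 + k + t) mod n = 0" using negm_eq_iff[OF n_pos] assms by simp
  also have "\<dots> \<longleftrightarrow> k' = k \<and> b1 = negm n (t + k)" using negm_eq_iff[OF n_pos, of b1 "t + k"] assms b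
    by (simp add: algebra_simps)
  finally show ?thesis using b by auto
qed

lemma antipode_index_in_Bidx: "b \<in> Bidx n d \<Longrightarrow> antipode_index b \<in> Bidx n d"
  using negm_lt[OF n_pos] by (cases b) (auto simp: antipode_index_def)

lemma antipode_index_inj:
  assumes "b \<in> Bidx n d" "b' \<in> Bidx n d"
  shows "antipode_index b' = antipode_index b \<longleftrightarrow> b' = b"
proof -
  obtain t k where tk: "antipode_index b = (t, k)" by fastforce
  then have mem: "(t, k) \<in> Bidx n d" using antipode_index_in_Bidx[OF assms(1)] by simp
  then have "b = (negm n (t + k), k)" using antipode_index_eq_iff[OF assms(1)] tk by blast
  then show ?thesis using tk antipode_index_eq_iff[OF assms(2) mem] by simp
qed

lemma Slin_eq: "Slin n d q y c = (\<Sum>b\<in>Bidx n d. y b * antipode_coeff n q (fst b) (snd b) * bv (antipode_index b) c)"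
  unfolding Slin_def antipode_index_def by (intro sum.cong refl) (auto simp: Spath_eq)

lemma Slin_antipode_index:
  assumes "b \<in> Bidx n d"
  shows "Slin n d q y (antipode_index b) = y b * antipode_coeff n q (fst b) (snd b)"
proof -
  have "Slin n d q y (antipode_index b) = (\<Sum>b'\<in>Bidx n d. y b' * antipode_coeff n q (fst b') (snd b') * bv b b')"
    unfolding Slin_eq
  proof (intro sum.cong refl)
    fix b' assume "b' \<in> Bidx n d"
    have hb: "bv (antipode_index b') (antipode_index b) = bv b b'"
      using antipode_index_inj[OF assms \<open>b' \<in> Bidx n d\<close>] by (auto simp: bv_def)
    then show "y b' * antipode_coeff n q (fst b') (snd b') * bv (antipode_index b') (antipode_index b)
      = y b' * antipode_coeff n q (fst b') (snd b') * bv b b'" by (simp only: hb)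
  qed
  then show ?thesis using assms by (simp add: sum_mult_bv)
qed

lemma Sinv_bv:
  assumes tk: "(t, k) \<in> Bidx n d"
  shows "Sinv n d q (bv (t, k)) = (\<lambda>c. inverse (antipode_coeff n q (negm n (t + k)) k) * bv (negm n (t + k), k) c)"
  unfolding Sinv_def
proof (rule the_equality)
  let ?b0 = "(negm n (t + k), k)"
  let ?s0 = "antipode_coeff n q (negm n (t + k)) k"
  have b0: "?b0 \<in> Bidx n d" using tk negm_lt[OF n_pos] by simp
  have index_b0: "antipode_index b = (t, k) \<longleftrightarrow> b = ?b0" if "b \<in> Bidx n d" for b
    using antipode_index_eq_iff[OF that tk] .
  have s0: "?s0 \<noteq> 0" using antipode_coeff_nonzero[OF q_nonzero] .
  show "(\<lambda>c. inverse ?s0 * bv ?b0 c) \<in> Vspace n d \<and> Slin n d q (\<lambda>c. inverse ?s0 * bv ?b0 c) = bv (t, k)"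
  proof
    show "(\<lambda>c. inverse ?s0 * bv ?b0 c) \<in> Vspace n d" using b0 by (auto simp: Vspace_def bv_def)
    have "Slin n d q (\<lambda>c. inverse ?s0 * bv ?b0 c) c = bv (t, k) c" for c
    proof -
      have "Slin n d q (\<lambda>c. inverse ?s0 * bv ?b0 c) c
          = (\<Sum>b\<in>Bidx n d. bv ?b0 b * (inverse ?s0 * antipode_coeff n q (fst b) (snd b) * bv (antipode_index b) c))"
        unfolding Slin_eq by (intro sum.cong refl) (simp add: algebra_simps)
      also have "\<dots> = bv (antipode_index ?b0) c"
        using b0 s0 by (simp add: sum_bv_mult)
      finally show ?thesis using index_b0[OF b0] by simp
    qed
    then show "Slin n d q (\<lambda>c. inverse ?s0 * bv ?b0 c) = bv (t, k)" ..
  qed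
  fix y
  assume y: "y \<in> Vspace n d \<and> Slin n d q y = bv (t, k)"
  show "y = (\<lambda>c. inverse ?s0 * bv ?b0 c)"
  proof
    fix b
    show "y b = inverse ?s0 * bv ?b0 b"
    proof (cases "b \<in> Bidx n d")
      case True
      then have "y b * antipode_coeff n q (fst b) (snd b) = bv (t, k) (antipode_index b)"
        using y Slin_antipode_index by metis
      then show ?thesis using True index_b0[OF True] antipode_coeff_nonzero[OF q_nonzero, of n "fst b" "snd b"]
        by (auto simp: bv_def field_simps)
    next
      case False
      then show ?thesis using y b0 by (cases b) (auto simp: Vspace_def bv_def)
    qed
  qed
qed

lemma conv_eq: "x \<in> Bidx n d \<Longrightarrow> conv n d q f g x
    = (\<Sum>p\<in>Bidx n d \<times> Bidx n d. copath_coeff (fst x) (snd x) (fst p) (snd p) * f (fst p) * g (snd p))"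
  unfolding conv_def by (cases x) (auto simp: coPath_eq intro!: sum.cong)

lemma conv_outside: "x \<notin> Bidx n d \<Longrightarrow> conv n d q f g x = 0"
  unfolding conv_def by simp

lemma conv_bv:
  assumes "a \<in> Bidx n d" "b \<in> Bidx n d"
  shows "conv n d q (bv a) (bv b) x = (if x \<in> Bidx n d then copath_coeff (fst x) (snd x) a b else 0)"
proof (cases "x \<in> Bidx n d")
  case True
  have "conv n d q (bv a) (bv b) x = (\<Sum>p\<in>Bidx n d \<times> Bidx n d. if p = (a, b) then copath_coeff (fst x) (snd x) a b else 0)"
    unfolding conv_eq[OF True] by (intro sum.cong refl) (auto simp: bv_def)
  also have "\<dots> = copath_coeff (fst x) (snd x) a b" using assms by (simp add: sum.delta)
  finally show ?thesis using True by simp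
qed (simp add: conv_outside)

lemma conv_counit_left: "conv n d q (bv (0,0)) g x = (if x \<in> Bidx n d then g x else 0)"
proof (cases "x \<in> Bidx n d")
  case True
  have "conv n d q (bv (0,0)) g x = (\<Sum>p\<in>Bidx n d \<times> Bidx n d. if p = ((0,0), x) then g x else 0)"
    unfolding conv_eq[OF True]
  proof (intro sum.cong refl)
    fix p assume p: "p \<in> Bidx n d \<times> Bidx n d"
    obtain a s b t where pp: "p = ((a,s),(b,t))" by (metis prod.collapse)
    obtain x1 x2 where xx: "x = (x1, x2)" by fastforce
    show "copath_coeff (fst x) (snd x) (fst p) (snd p) * bv (0, 0) (fst p) * g (snd p) = (if p = ((0, 0), x) then g x else 0)"
      using p pp xx True d_pos n_pos by (auto simp: copath_coeff_def bv_def)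
  qed
  also have "\<dots> = g x" using True d_pos n_pos by (simp add: sum.delta)
  finally show ?thesis using True by simp
qed (simp add: conv_outside)

lemma conv_counit_right: "conv n d q f (bv (0,0)) x = (if x \<in> Bidx n d then f x else 0)"
proof (cases "x \<in> Bidx n d")
  case True
  have "conv n d q f (bv (0,0)) x = (\<Sum>p\<in>Bidx n d \<times> Bidx n d. if p = (x, (0,0)) then f x else 0)"
    unfolding conv_eq[OF True]
  proof (intro sum.cong refl)
    fix p assume p: "p \<in> Bidx n d \<times> Bidx n d"
    obtain a s b t where pp: "p = ((a,s),(b,t))" by (metis prod.collapse)
    obtain x1 x2 where xx: "x = (x1, x2)" by fastforce
    show "copath_coeff (fst x) (snd x) (fst p) (snd p) * f (fst p) * bv (0, 0) (snd p) = (if p = (x, (0,0)) then f x else 0)"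
      using p pp xx True d_pos n_pos by (auto simp: copath_coeff_def bv_def)
  qed
  also have "\<dots> = f x" using True d_pos n_pos by (simp add: sum.delta)
  finally show ?thesis using True by simp
qed (simp add: conv_outside)

lemma conv_scale_right: "conv n d q f (\<lambda>x. k * g x) = (\<lambda>x. k * conv n d q f g x)"
  unfolding conv_def by (auto simp: sum_distrib_left algebra_simps)

lemma conv_cong: "(\<And>x. x \<in> Bidx n d \<Longrightarrow> g x = g' x) \<Longrightarrow> conv n d q f g y = conv n d q f g' y"
  unfolding conv_def by (auto intro!: sum.cong)

lemma conv_expand: "conv n d q f g x = (\<Sum>a\<in>Bidx n d. \<Sum>b\<in>Bidx n d. f a * g b * conv n d q (bv a) (bv b) x)"
proof (cases "x \<in> Bidx n d")
  case True
  have "conv n d q f g x = (\<Sum>a\<in>Bidx n d. \<Sum>b\<in>Bidx n d. copath_coeff (fst x) (snd x) a b * f a * g b)"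
    unfolding conv_eq[OF True] sum.cartesian_product by (simp add: split_def)
  also have "\<dots> = (\<Sum>a\<in>Bidx n d. \<Sum>b\<in>Bidx n d. f a * g b * conv n d q (bv a) (bv b) x)"
    using True by (intro sum.cong refl) (simp add: conv_bv)
  finally show ?thesis .
next
  case False
  then show ?thesis by (simp add: conv_outside)
qed

lemma co3_eq:
  assumes h: "(l, m) \<in> Bidx n d"
  shows "co3 n d q (l, m) h1 h2 h3 = (if h1 \<in> Bidx n d \<and> h2 \<in> Bidx n d \<and> h3 \<in> Bidx n d \<and> snd h1 + snd h2 + snd h3 = m
      \<and> (fst h1 + fst h2 + fst h3) mod n = l
     then qbinom q m (snd h1 + snd h2) * q ^ ((snd h1 + snd h2) * fst h3) * (qbinom q (snd h1 + snd h2) (snd h1) * q ^ (snd h1 * fst h2)) else 0)"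
proof -
  obtain f1 s1 where 1: "h1 = (f1, s1)" by fastforce
  obtain f2 s2 where 2: "h2 = (f2, s2)" by fastforce
  obtain f3 s3 where 3: "h3 = (f3, s3)" by fastforce
  let ?c0 = "((f1 + f2) mod n, s1 + s2)"
  have "co3 n d q (l, m) h1 h2 h3 = (\<Sum>c\<in>Bidx n d. if c = ?c0 then copath_coeff l m ?c0 h3 * copath_coeff (fst ?c0) (snd ?c0) h1 h2 else 0)"
    unfolding co3_def
  proof (intro sum.cong refl)
    fix c assume c: "c \<in> Bidx n d"
    obtain c1 c2 where cc: "c = (c1, c2)" by fastforce
    have e: "coPath n d q (fst (l, m)) (snd (l, m)) (c, h3) * coPath n d q (fst c) (snd c) (h1, h2)
        = copath_coeff l m c h3 * copath_coeff c1 c2 h1 h2"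
      using h c cc by (simp add: coPath_eq)
    show "coPath n d q (fst (l, m)) (snd (l, m)) (c, h3) * coPath n d q (fst c) (snd c) (h1, h2) =
         (if c = ?c0 then copath_coeff l m ?c0 h3 * copath_coeff (fst ?c0) (snd ?c0) h1 h2 else 0)"
    proof (cases "c = ?c0")
      case True then show ?thesis using e cc by simp
    next
      case False
      then have "copath_coeff c1 c2 h1 h2 = 0" using cc c 1 2 by (auto simp: copath_coeff_def)
      then show ?thesis using e False by simp
    qed
  qed
  also have "\<dots> = (if ?c0 \<in> Bidx n d then copath_coeff l m ?c0 h3 * copath_coeff (fst ?c0) (snd ?c0) h1 h2 else 0)"
    by (simp add: sum.delta)
  also have "\<dots> = (if h1 \<in> Bidx n d \<and> h2 \<in> Bidx n d \<and> h3 \<in> Bidx n d \<and> snd h1 + snd h2 + snd h3 = m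
      \<and> (fst h1 + fst h2 + fst h3) mod n = l
     then qbinom q m (snd h1 + snd h2) * q ^ ((snd h1 + snd h2) * fst h3) * (qbinom q (snd h1 + snd h2) (snd h1) * q ^ (snd h1 * fst h2)) else 0)"
  proof -
    have lm: "l < n" "m < d" using h by auto
    have md: "((f1 + f2) mod n + f3) mod n = (f1 + f2 + f3) mod n" by (simp add: mod_add_left_eq)
    show ?thesis using lm 1 2 3 n_pos by (auto simp: copath_coeff_def md)
  qed
  finally show ?thesis .
qed

lemma sum_co3:
  assumes lm: "(l, m) \<in> Bidx n d" and h1: "(a1, s1) \<in> Bidx n d" and h3: "(a3, s3) \<in> Bidx n d"
  shows "(\<Sum>h2\<in>Bidx n d. co3 n d q (l, m) (a1, s1) h2 (a3, s3) * F h2) =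
    (if s1 + s3 \<le> m then qbinom q m (m - s3) * q ^ ((m - s3) * a3) * (qbinom q (m - s3) s1 * q ^ (s1 * ((l + n - (a1 + a3) mod n) mod n)))
       * F ((l + n - (a1 + a3) mod n) mod n, m - s1 - s3) else 0)"
proof -
  let ?f = "(l + n - (a1 + a3) mod n) mod n"
  let ?H = "(?f, m - s1 - s3)"
  have fl: "?f < n" using n_pos by simp
  have hd: "m - s1 - s3 < d" "m - (s1 + s3) < d" using lm by auto
  have mod_f: "(a1 + ?f + a3) mod n = l"
  proof -
    have "((a1 + a3) mod n + ?f) mod n = l mod n" using eq_mod_diff_iff[of "(a1 + a3) mod n" n ?f l] n_pos by simp
    then show ?thesis using lm by (simp add: mod_add_left_eq algebra_simps)
  qed
  have "(\<Sum>h2\<in>Bidx n d. co3 n d q (l, m) (a1, s1) h2 (a3, s3) * F h2) =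
     (\<Sum>h2\<in>Bidx n d. if h2 = ?H then (if s1 + s3 \<le> m then co3 n d q (l, m) (a1, s1) ?H (a3, s3) * F ?H else 0) else 0)"
  proof (intro sum.cong refl)
    fix h2 assume h2: "h2 \<in> Bidx n d"
    obtain f2 s2 where hh: "h2 = (f2, s2)" by fastforce
    show "co3 n d q (l, m) (a1, s1) h2 (a3, s3) * F h2
        = (if h2 = ?H then (if s1 + s3 \<le> m then co3 n d q (l, m) (a1, s1) ?H (a3, s3) * F ?H else 0) else 0)"
    proof (cases "s1 + s2 + s3 = m \<and> (a1 + f2 + a3) mod n = l")
      case True
      have X0: "((a1 + a3) mod n + f2) mod n = (a1 + a3 + f2) mod n" by (rule mod_add_left_eq)
      have X: "((a1 + a3) mod n + f2) mod n = (a1 + f2 + a3) mod n" unfolding X0 by (simp add: ac_simps)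
      have "((a1 + a3) mod n + f2) mod n = l mod n" using True lm unfolding X by simp
      then have "f2 = ?f" using eq_mod_diff_iff[of "(a1 + a3) mod n" n f2 l] n_pos h2 hh by simp
      then show ?thesis using True hh by auto
    next
      case False
      have "h2 = ?H \<Longrightarrow> s1 + s3 \<le> m \<Longrightarrow> False" using False hh mod_f by auto
      then show ?thesis using False hh co3_eq[OF lm] by auto
    qed
  qed
  also have "\<dots> = (if s1 + s3 \<le> m then co3 n d q (l, m) (a1, s1) ?H (a3, s3) * F ?H else 0)"
    using lm fl hd by (simp add: sum.delta)
  also have "\<dots> = (if s1 + s3 \<le> m then qbinom q m (m - s3) * q ^ ((m - s3) * a3) * (qbinom q (m - s3) s1 * q ^ (s1 * ?f)) * F ?H else 0)"
  proof (cases "s1 + s3 \<le> m")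
    case True
    have "co3 n d q (l, m) (a1, s1) ?H (a3, s3) = qbinom q m (m - s3) * q ^ ((m - s3) * a3) * (qbinom q (m - s3) s1 * q ^ (s1 * ?f))"
      using True lm h1 h3 fl mod_f by (simp add: co3_eq less_imp_diff_less)
    then show ?thesis using True by simp
  qed simp
  finally show ?thesis .
qed

subsection \<open>Products in the double\<close>

lemma mulL_mulL_bv:
  assumes "u \<in> Bidx n d" "x \<in> Bidx n d" "h \<in> Bidx n d"
  shows "mulL n d (mulL n d (bv u) (bv x)) (bv h) b' = (if fst u = (fst x + snd x) mod n \<and> fst x = (fst h + snd h) mod n
     \<and> snd u + snd x + snd h < d \<and> b' = (fst h, snd u + snd x + snd h) then 1 else 0)"
proof (cases "fst u = (fst x + snd x) mod n \<and> snd u + snd x < d")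
  case True
  then have m1: "mulL n d (bv u) (bv x) = bv (fst x, snd u + snd x)" using assms by (simp add: mulL_bv pathmul_def)
  have in1: "(fst x, snd u + snd x) \<in> Bidx n d" using True assms by (cases x) auto
  show ?thesis unfolding m1 mulL_bv[OF in1 assms(3)] using True by (auto simp: pathmul_def bv_def)
next
  case False
  have m1: "mulL n d (bv u) (bv x) = (\<lambda>_. 0)" unfolding mulL_bv[OF assms(1,2)] pathmul_def by (rule if_not_P[OF False])
  show ?thesis unfolding m1 mulL_zero_left using False by auto
qed

definition sandwich :: "nat \<times> nat \<Rightarrow> nat \<times> nat \<Rightarrow> nat \<times> nat \<Rightarrow> nat \<times> nat \<Rightarrow> 'a" where
  "sandwich h3 h1 b' x = mulL n d (mulL n d (Sinv n d q (bv h3)) (bv x)) (bv h1) b'"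

lemma sandwich_eq:
  assumes "(t, k) \<in> Bidx n d" "(a, s) \<in> Bidx n d" "(x1, x2) \<in> Bidx n d"
  shows "sandwich (t, k) (a, s) b' (x1, x2) =
    (if b' = (a, k + x2 + s) \<and> k + x2 + s < d \<and> x1 = (a + s) mod n \<and> t = negm n (a + k + x2 + s)
     then inverse (antipode_coeff n q (negm n (t + k)) k) else 0)"
proof -
  have u: "(negm n (t + k), k) \<in> Bidx n d" using assms negm_lt[OF n_pos] by simp
  have "(x1 + x2) mod n = negm n (t + k) \<longleftrightarrow> t = negm n (a + k + x2 + s)" if x1: "x1 = (a + s) mod n"
  proof -
    have "(x1 + x2) mod n = negm n (t + k) \<longleftrightarrow> (t + k + (x1 + x2) mod n) mod n = 0"
      using negm_eq_iff[OF n_pos, of "(x1 + x2) mod n" "t + k"] n_pos by simp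
    also have "(t + k + (x1 + x2) mod n) mod n = (t + k + (a + s + x2)) mod n"
      using x1 by (simp add: mod_simps)
    also have "t + k + (a + s + x2) = a + k + x2 + s + t" by simp
    also have "(a + k + x2 + s + t) mod n = 0 \<longleftrightarrow> t = negm n (a + k + x2 + s)"
      using negm_eq_iff[OF n_pos, of t "a + k + x2 + s"] assms(1) by simp
    finally show ?thesis .
  qed
  then show ?thesis
    unfolding sandwich_def Sinv_bv[OF assms(1)] mulL_scale_left mulL_mulL_bv[OF u assms(3,2)]
    by (auto simp: eq_commute[of "negm n (t + k)"])
qed

lemma sandwich_counit:
  assumes "h3 \<in> Bidx n d" "h1 \<in> Bidx n d" "x \<in> Bidx n d"
  shows "sandwich h3 h1 (0,0) x = (if h3 = (0,0) \<and> h1 = (0,0) \<and> x = (0,0) then 1 else 0)"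
  using assms by (cases h3; cases h1; cases x) (auto simp: sandwich_eq negm_0)

lemma sandwich_G:
  assumes "h3 \<in> Bidx n d" "h1 \<in> Bidx n d" "x \<in> Bidx n d"
  shows "sandwich h3 h1 (1,0) x = (if h3 = (n-1,0) \<and> h1 = (1,0) \<and> x = (1,0) then 1 else 0)"
  using assms n_ge_2 by (cases h3; cases h1; cases x) (auto simp: sandwich_eq negm_1[unfolded One_nat_def])

lemma sandwich_X:
  assumes "h3 \<in> Bidx n d" "h1 \<in> Bidx n d" "x \<in> Bidx n d"
  shows "sandwich h3 h1 (0,1) x = (if h3 = (n-1,0) \<and> h1 = (0,0) \<and> x = (0,1) then 1 else 0)
     + (if h3 = (n-1,0) \<and> h1 = (0,1) \<and> x = (1,0) then 1 else 0)
     + (if h3 = (n-1,1) \<and> h1 = (0,0) \<and> x = (0,0) then - inverse q else 0)"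
proof -
  obtain t k a s x1 x2 where h: "h3 = (t, k)" "h1 = (a, s)" "x = (x1, x2)" by (metis prod.collapse)
  have mem: "(t, k) \<in> Bidx n d" "(a, s) \<in> Bidx n d" "(x1, x2) \<in> Bidx n d" using assms h by simp_all
  have "k + x2 + s \<noteq> 1 \<or> (k = 0 \<and> x2 = 1 \<and> s = 0) \<or> (k = 0 \<and> x2 = 0 \<and> s = 1) \<or> (k = 1 \<and> x2 = 0 \<and> s = 0)"
    by arith
  then consider "k + x2 + s \<noteq> 1" | "k = 0" "x2 = 1" "s = 0" | "k = 0" "x2 = 0" "s = 1" | "k = 1" "x2 = 0" "s = 0"
    by blast
  then show ?thesis
  proof cases
    case 1
    then show ?thesis unfolding h sandwich_eq[OF mem] by auto
  next
    case 2
    then show ?thesis unfolding h sandwich_eq[OF mem] using d_ge_2 by (auto simp: negm_1 negm_1[unfolded One_nat_def])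
  next
    case 3
    then show ?thesis unfolding h sandwich_eq[OF mem] using d_ge_2 n_ge_2 by (auto simp: negm_1 negm_1[unfolded One_nat_def])
  next
    case 4
    moreover have "negm n (n - 1 + 1) = 0" using n_pos negm_self by simp
    ultimately show ?thesis unfolding h sandwich_eq[OF mem] using d_ge_2 by (auto simp: negm_1 negm_1[unfolded One_nat_def])
  qed
qed

lemma sandwich_vertices:
  assumes "t < n" "a < n" "b' \<in> Bidx n d" "x \<in> Bidx n d"
  shows "sandwich (t, 0) (a, 0) b' x = (if a = fst b' \<and> t = negm n (fst b' + snd b') then bv b' x else 0)"
  using assms d_pos by (cases b'; cases x) (auto simp: sandwich_eq bv_def)

lemma conv_sandwich_vertices:
  assumes "t < n" "a < n" "b' \<in> Bidx n d"
  shows "conv n d q f (sandwich (t, 0) (a, 0) b') y =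
    (if a = fst b' \<and> t = negm n (fst b' + snd b') then conv n d q f (bv b') y else 0)"
proof -
  have "conv n d q f (sandwich (t, 0) (a, 0) b') y =
      conv n d q f (\<lambda>x. if a = fst b' \<and> t = negm n (fst b' + snd b') then bv b' x else 0) y"
    by (rule conv_cong) (simp add: sandwich_vertices[OF assms])
  then show ?thesis by (auto simp: conv_def)
qed

lemma dbprod_sandwich: "dbprod n d q b h b' g c = (\<Sum>h1\<in>Bidx n d. \<Sum>h2\<in>Bidx n d. \<Sum>h3\<in>Bidx n d.
      co3 n d q h h1 h2 h3 * conv n d q (bv b) (sandwich h3 h1 b') (fst c) * mulL n d (bv h2) (bv g) (snd c))"
  unfolding dbprod_def sandwich_def ..

lemma dbprod_counit:
  assumes "g \<in> Bidx n d"
  shows "dbprod n d q (0,0) h b' g c = (if fst c \<in> Bidx n d then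
    (\<Sum>h1\<in>Bidx n d. \<Sum>h2\<in>Bidx n d. \<Sum>h3\<in>Bidx n d. co3 n d q h h1 h2 h3 * sandwich h3 h1 b' (fst c) * pathmul n d h2 g (snd c)) else 0)"
proof (cases "fst c \<in> Bidx n d")
  case True
  show ?thesis unfolding dbprod_def conv_counit_left using True assms
    by (auto simp: sandwich_def mulL_bv intro!: sum.cong)
next
  case False
  show ?thesis unfolding dbprod_def conv_counit_left using False by simp
qed

lemma mulD_tens_bv_left:
  assumes "a \<in> Bidx n d" "h \<in> Bidx n d"
  shows "mulD n d q (tens (bv a) (bv h)) Q c = (\<Sum>r\<in>Bidx n d \<times> Bidx n d. Q r * dbprod n d q a h (fst r) (snd r) c)"
proof -
  have "mulD n d q (tens (bv a) (bv h)) Q c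
      = (\<Sum>p\<in>Bidx n d \<times> Bidx n d. if p = (a, h) then (\<Sum>r\<in>Bidx n d \<times> Bidx n d. Q r * dbprod n d q (fst p) (snd p) (fst r) (snd r) c) else 0)"
    unfolding mulD_def
  proof (intro sum.cong refl)
    fix p :: "(nat \<times> nat) \<times> (nat \<times> nat)"
    have t: "tens (bv a) (bv h) p = (if p = (a, h) then 1 else 0)" by (cases p) (auto simp: tens_def bv_def)
    show "(\<Sum>r\<in>Bidx n d \<times> Bidx n d. tens (bv a) (bv h) p * Q r * dbprod n d q (fst p) (snd p) (fst r) (snd r) c) =
      (if p = (a, h) then (\<Sum>r\<in>Bidx n d \<times> Bidx n d. Q r * dbprod n d q (fst p) (snd p) (fst r) (snd r) c) else 0)"
    proof (cases "p = (a, h)")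
      case True then show ?thesis by (simp add: tens_def bv_def)
    next
      case False
      then have z: "tens (bv a) (bv h) p = 0" using t by simp
      show ?thesis using False by (simp only: z if_False mult_zero_left sum.neutral_const)
    qed
  qed
  also have "\<dots> = (\<Sum>r\<in>Bidx n d \<times> Bidx n d. Q r * dbprod n d q a h (fst r) (snd r) c)"
    using assms by (simp add: sum.delta)
  finally show ?thesis .
qed

lemma mulD_tens_bv:
  assumes "a \<in> Bidx n d" "h \<in> Bidx n d" "a' \<in> Bidx n d" "g \<in> Bidx n d"
  shows "mulD n d q (tens (bv a) (bv h)) (tens (bv a') (bv g)) c = dbprod n d q a h a' g c"
proof -
  have "mulD n d q (tens (bv a) (bv h)) (tens (bv a') (bv g)) c
      = (\<Sum>r\<in>Bidx n d \<times> Bidx n d. if r = (a', g) then dbprod n d q a h (fst r) (snd r) c else 0)"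
    unfolding mulD_tens_bv_left[OF assms(1,2)] by (intro sum.cong refl) (auto simp: tens_def bv_def)
  also have "\<dots> = dbprod n d q a h a' g c" using assms by (simp add: sum.delta)
  finally show ?thesis .
qed

lemma mulD_tens_bv_oneL:
  assumes "a \<in> Bidx n d" "h \<in> Bidx n d" "a' \<in> Bidx n d"
  shows "mulD n d q (tens (bv a) (bv h)) (tens (bv a') (oneL n)) c = (\<Sum>g\<in>Bidx n d. oneL n g * dbprod n d q a h a' g c)"
proof -
  have "mulD n d q (tens (bv a) (bv h)) (tens (bv a') (oneL n)) c
      = (\<Sum>r\<in>Bidx n d \<times> Bidx n d. if fst r = a' then oneL n (snd r) * dbprod n d q a h a' (snd r) c else 0)"
    unfolding mulD_tens_bv_left[OF assms(1,2)] by (intro sum.cong refl) (auto simp: tens_def bv_def)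
  also have "\<dots> = (\<Sum>r1\<in>Bidx n d. \<Sum>g\<in>Bidx n d. if r1 = a' then oneL n g * dbprod n d q a h a' g c else 0)"
    unfolding sum.cartesian_product by (intro sum.cong refl) auto
  also have "\<dots> = (\<Sum>r1\<in>Bidx n d. if r1 = a' then (\<Sum>g\<in>Bidx n d. oneL n g * dbprod n d q a h a' g c) else 0)"
    by (intro sum.cong refl) auto
  also have "\<dots> = (\<Sum>g\<in>Bidx n d. oneL n g * dbprod n d q a h a' g c)" using assms by (simp add: sum.delta)
  finally show ?thesis .
qed

lemma sum_oneL_pathmul:
  assumes "a \<in> Bidx n d"
  shows "(\<Sum>g\<in>Bidx n d. oneL n g * pathmul n d a g c) = bv a c"
proof -
  obtain a1 a2 where a: "a = (a1, a2)" by fastforce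
  have "(\<Sum>g\<in>Bidx n d. oneL n g * pathmul n d a g c) = (\<Sum>g\<in>Bidx n d. if g = (a1, 0) then bv a c else 0)"
  proof (intro sum.cong refl)
    fix g assume g: "g \<in> Bidx n d"
    obtain k s where gg: "g = (k, s)" by fastforce
    show "oneL n g * pathmul n d a g c = (if g = (a1, 0) then bv a c else 0)"
      using g gg a assms by (auto simp: oneL_apply pathmul_def)
  qed
  also have "\<dots> = bv a c" using assms a d_pos by (simp add: sum.delta)
  finally show ?thesis .
qed

lemma dbprod_vertex:
  assumes k: "k < n" and b: "b \<in> Bidx n d" and b': "b' \<in> Bidx n d" and g': "g' \<in> Bidx n d"
  shows "dbprod n d q b (k,0) b' g' c = (if (fst b' + (fst g' + snd g') mod n + negm n (fst b' + snd b')) mod n = k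
     then conv n d q (bv b) (bv b') (fst c) * bv g' (snd c) else 0)"
proof -
  let ?e' = "fst b' + snd b'"
  let ?eg = "(fst g' + snd g') mod n"
  let ?V = "conv n d q (bv b) (bv b') (fst c) * bv g' (snd c)"
  let ?K = "(fst b' + ?eg + negm n ?e') mod n"
  have km: "(k, 0) \<in> Bidx n d" using k d_pos by simp
  have "dbprod n d q b (k,0) b' g' c = (\<Sum>h1\<in>Bidx n d. \<Sum>h2\<in>Bidx n d. \<Sum>h3\<in>Bidx n d.
     if h1 = (fst b', 0) \<and> h3 = (negm n ?e', 0) then (if h2 = (?eg, 0) \<and> ?K = k then ?V else 0) else 0)"
    unfolding dbprod_sandwich
  proof (intro sum3_cong)
    fix h1 h2 h3 assume h: "h1 \<in> Bidx n d" "h2 \<in> Bidx n d" "h3 \<in> Bidx n d"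
    obtain a s1 where h1: "h1 = (a, s1)" by fastforce
    obtain f2 s2 where h2: "h2 = (f2, s2)" by fastforce
    obtain t s3 where h3: "h3 = (t, s3)" by fastforce
    have lt: "a < n" "f2 < n" "t < n" using h h1 h2 h3 by auto
    show "co3 n d q (k, 0) h1 h2 h3 * conv n d q (bv b) (sandwich h3 h1 b') (fst c) * mulL n d (bv h2) (bv g') (snd c) =
      (if h1 = (fst b', 0) \<and> h3 = (negm n ?e', 0) then (if h2 = (?eg, 0) \<and> ?K = k then ?V else 0) else 0)"
    proof (cases "s1 = 0 \<and> s2 = 0 \<and> s3 = 0 \<and> (a + f2 + t) mod n = k")
      case True
      have c3: "co3 n d q (k, 0) h1 h2 h3 = 1" using True h h1 h2 h3 co3_eq[OF km] by simp
      have cv: "conv n d q (bv b) (sandwich h3 h1 b') (fst c) = (if a = fst b' \<and> t = negm n ?e' then conv n d q (bv b) (bv b') (fst c) else 0)"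
        using True h1 h3 conv_sandwich_vertices[OF lt(3) lt(1) b'] by simp
      have ml: "mulL n d (bv h2) (bv g') (snd c) = (if f2 = ?eg then bv g' (snd c) else 0)"
        using True h2 h(2) g' by (cases g') (simp add: mulL_bv pathmul_def)
      show ?thesis unfolding c3 cv ml using True h1 h2 h3 by auto
    next
      case False
      have c3: "co3 n d q (k, 0) h1 h2 h3 = 0" using False h h1 h2 h3 co3_eq[OF km] by auto
      have "\<not> (h1 = (fst b', 0) \<and> h3 = (negm n ?e', 0) \<and> h2 = (?eg, 0) \<and> ?K = k)"
        using False h1 h2 h3 by auto
      then show ?thesis unfolding c3 by auto
    qed
  qed
  also have "\<dots> = (\<Sum>h2\<in>Bidx n d. if h2 = (?eg, 0) \<and> ?K = k then ?V else 0)"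
  proof -
    have fb: "fst b' < n" using b' by (cases b') auto
    show ?thesis using fb negm_lt[OF n_pos] d_pos by (intro sum3_delta) auto
  qed
  also have "\<dots> = (\<Sum>h2\<in>Bidx n d. if h2 = (?eg, 0) then (if ?K = k then ?V else 0) else 0)"
    by (intro sum.cong refl) auto
  also have "\<dots> = (if ?K = k then ?V else 0)" using n_pos d_pos by (simp add: sum.delta)
  finally show ?thesis .
qed

lemma sum_oneL_dbprod:
  assumes b: "b \<in> Bidx n d" and b': "b' \<in> Bidx n d" and g': "g' \<in> Bidx n d"
  shows "(\<Sum>h\<in>Bidx n d. oneL n h * dbprod n d q b h b' g' c) = conv n d q (bv b) (bv b') (fst c) * bv g' (snd c)"
proof -
  let ?V = "conv n d q (bv b) (bv b') (fst c) * bv g' (snd c)"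
  let ?K = "(fst b' + (fst g' + snd g') mod n + negm n (fst b' + snd b')) mod n"
  have "(\<Sum>h\<in>Bidx n d. oneL n h * dbprod n d q b h b' g' c) = (\<Sum>h\<in>Bidx n d. if h = (?K, 0) then ?V else 0)"
  proof (intro sum.cong refl)
    fix h assume h: "h \<in> Bidx n d"
    obtain k s where hh: "h = (k, s)" by fastforce
    show "oneL n h * dbprod n d q b h b' g' c = (if h = (?K, 0) then ?V else 0)"
    proof (cases "s = 0")
      case True
      have "k < n" using h hh by simp
      then show ?thesis using hh True dbprod_vertex[OF _ b b' g', of k c] by (auto simp: oneL_apply)
    next
      case False
      then show ?thesis using hh by (simp add: oneL_apply)
    qed
  qed
  also have "\<dots> = ?V" using n_pos d_pos by (simp add: sum.delta)
  finally show ?thesis .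
qed

lemma mulD_tens_oneL:
  assumes y: "y \<in> Vspace n d"
  shows "mulD n d q (tens f (oneL n)) (tens g y) = tens (conv n d q f g) y"
proof (rule ext)
  fix c :: "(nat \<times> nat) \<times> (nat \<times> nat)"
  let ?B = "Bidx n d"
  let ?D = "\<lambda>p1 p2 r1 r2. dbprod n d q p1 p2 r1 r2 c"
  have "mulD n d q (tens f (oneL n)) (tens g y) c = (\<Sum>p1\<in>?B. \<Sum>p2\<in>?B. \<Sum>r1\<in>?B. \<Sum>r2\<in>?B.
      f p1 * oneL n p2 * (g r1 * y r2) * ?D p1 p2 r1 r2)"
    unfolding mulD_def tens_def by (simp only: sum.cartesian_product' fst_conv snd_conv)
  also have "\<dots> = (\<Sum>p1\<in>?B. \<Sum>r1\<in>?B. \<Sum>r2\<in>?B. \<Sum>p2\<in>?B.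
      f p1 * oneL n p2 * (g r1 * y r2) * ?D p1 p2 r1 r2)"
  proof (rule sum.cong[OF refl])
    fix p1 :: "nat \<times> nat"
    have "(\<Sum>p2\<in>?B. \<Sum>r1\<in>?B. \<Sum>r2\<in>?B. f p1 * oneL n p2 * (g r1 * y r2) * ?D p1 p2 r1 r2)
       = (\<Sum>r1\<in>?B. \<Sum>p2\<in>?B. \<Sum>r2\<in>?B. f p1 * oneL n p2 * (g r1 * y r2) * ?D p1 p2 r1 r2)"
      by (rule sum.swap)
    also have "\<dots> = (\<Sum>r1\<in>?B. \<Sum>r2\<in>?B. \<Sum>p2\<in>?B. f p1 * oneL n p2 * (g r1 * y r2) * ?D p1 p2 r1 r2)"
      by (rule sum.cong[OF refl], rule sum.swap)
    finally show "(\<Sum>p2\<in>?B. \<Sum>r1\<in>?B. \<Sum>r2\<in>?B. f p1 * oneL n p2 * (g r1 * y r2) * ?D p1 p2 r1 r2)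
       = (\<Sum>r1\<in>?B. \<Sum>r2\<in>?B. \<Sum>p2\<in>?B. f p1 * oneL n p2 * (g r1 * y r2) * ?D p1 p2 r1 r2)" .
  qed
  also have "\<dots> = (\<Sum>p1\<in>?B. \<Sum>r1\<in>?B. \<Sum>r2\<in>?B. f p1 * g r1 * y r2 * (conv n d q (bv p1) (bv r1) (fst c) * bv r2 (snd c)))"
  proof (intro sum.cong refl)
    fix p1 r1 r2 assume h: "p1 \<in> ?B" "r1 \<in> ?B" "r2 \<in> ?B"
    have "(\<Sum>p2\<in>?B. f p1 * oneL n p2 * (g r1 * y r2) * ?D p1 p2 r1 r2) = f p1 * g r1 * y r2 * (\<Sum>p2\<in>?B. oneL n p2 * ?D p1 p2 r1 r2)"
      by (simp add: sum_distrib_left algebra_simps)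
    then show "(\<Sum>p2\<in>?B. f p1 * oneL n p2 * (g r1 * y r2) * ?D p1 p2 r1 r2)
        = f p1 * g r1 * y r2 * (conv n d q (bv p1) (bv r1) (fst c) * bv r2 (snd c))"
      using sum_oneL_dbprod[OF h] by simp
  qed
  also have "\<dots> = (\<Sum>p1\<in>?B. \<Sum>r1\<in>?B. f p1 * g r1 * conv n d q (bv p1) (bv r1) (fst c)) * (\<Sum>r2\<in>?B. y r2 * bv r2 (snd c))"
    by (simp add: sum_distrib_left sum_distrib_right algebra_simps)
  also have "\<dots> = conv n d q f g (fst c) * y (snd c)"
    using conv_expand[of f g "fst c"] sum_Vspace_bv[OF y] by simp
  finally show "mulD n d q (tens f (oneL n)) (tens g y) c = tens (conv n d q f g) y c"
    by (simp add: tens_def)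
qed

lemma dbprod_counit_counit:
  assumes lm: "(l, m) \<in> Bidx n d" and g: "g \<in> Bidx n d"
  shows "dbprod n d q (0,0) (l,m) (0,0) g c = bv (0,0) (fst c) * pathmul n d (l,m) g (snd c)"
proof (cases "fst c \<in> Bidx n d")
  case True
  let ?G = "\<lambda>h2. if fst c = (0,0) then pathmul n d h2 g (snd c) else 0"
  have "dbprod n d q (0,0) (l,m) (0,0) g c = (\<Sum>h1\<in>Bidx n d. \<Sum>h2\<in>Bidx n d. \<Sum>h3\<in>Bidx n d.
      if h1 = (0,0) \<and> h3 = (0,0) then co3 n d q (l,m) h1 h2 h3 * ?G h2 else 0)"
    unfolding dbprod_counit[OF g] if_P[OF True]
  proof (intro sum3_cong)
    fix h1 h2 h3 assume h: "h1 \<in> Bidx n d" "h2 \<in> Bidx n d" "h3 \<in> Bidx n d"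
    show "co3 n d q (l, m) h1 h2 h3 * sandwich h3 h1 (0, 0) (fst c) * pathmul n d h2 g (snd c) =
      (if h1 = (0,0) \<and> h3 = (0,0) then co3 n d q (l,m) h1 h2 h3 * ?G h2 else 0)"
      unfolding sandwich_counit[OF h(3) h(1) True] by auto
  qed
  also have "\<dots> = (\<Sum>h2\<in>Bidx n d. co3 n d q (l,m) (0,0) h2 (0,0) * ?G h2)"
    using d_pos n_pos by (intro sum3_delta) auto
  also have "\<dots> = ?G (l, m)" using sum_co3[OF lm, of 0 0 0 0 ?G] d_pos n_pos lm by simp
  finally show ?thesis by (simp add: bv_def)
next
  case False
  then have "fst c \<noteq> (0,0)" using d_pos n_pos by auto
  then show ?thesis unfolding dbprod_counit[OF g] using False by (simp add: bv_def)
qed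

lemma dbprod_counit_G:
  assumes lm: "(l, m) \<in> Bidx n d" and g: "g \<in> Bidx n d"
  shows "dbprod n d q (0,0) (l,m) (1,0) g c = bv (1,0) (fst c) * (q ^ (m * (n - 1)) * pathmul n d (l,m) g (snd c))"
proof (cases "fst c \<in> Bidx n d")
  case True
  let ?G = "\<lambda>h2. if fst c = (1,0) then pathmul n d h2 g (snd c) else 0"
  have "dbprod n d q (0,0) (l,m) (1,0) g c = (\<Sum>h1\<in>Bidx n d. \<Sum>h2\<in>Bidx n d. \<Sum>h3\<in>Bidx n d.
      if h1 = (1,0) \<and> h3 = (n-1,0) then co3 n d q (l,m) h1 h2 h3 * ?G h2 else 0)"
    unfolding dbprod_counit[OF g] if_P[OF True]
  proof (intro sum3_cong)
    fix h1 h2 h3 assume h: "h1 \<in> Bidx n d" "h2 \<in> Bidx n d" "h3 \<in> Bidx n d"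
    show "co3 n d q (l, m) h1 h2 h3 * sandwich h3 h1 (1, 0) (fst c) * pathmul n d h2 g (snd c) =
      (if h1 = (1,0) \<and> h3 = (n-1,0) then co3 n d q (l,m) h1 h2 h3 * ?G h2 else 0)"
      unfolding sandwich_G[OF h(3) h(1) True] by auto
  qed
  also have "\<dots> = (\<Sum>h2\<in>Bidx n d. co3 n d q (l,m) (1,0) h2 (n-1,0) * ?G h2)"
    using d_pos n_ge_2 by (intro sum3_delta) auto
  also have "\<dots> = q ^ (m * (n - 1)) * ?G (l, m)"
  proof -
    have i1: "(l + n - (1 + (n - 1)) mod n) mod n = l" using lm n_pos by simp
    show ?thesis using sum_co3[OF lm, of 1 0 "n-1" 0 ?G] d_pos n_ge_2 lm unfolding i1 by (simp add: mult.commute)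
  qed
  finally show ?thesis by (simp add: bv_def)
next
  case False
  then have "fst c \<noteq> (1,0)" using d_pos n_ge_2 by auto
  then show ?thesis unfolding dbprod_counit[OF g] using False by (simp add: bv_def)
qed

lemma dbprod_counit_X_sums:
  assumes g: "g \<in> Bidx n d" and c: "fst c \<in> Bidx n d"
  shows "dbprod n d q (0,0) h (0,1) g c =
      (\<Sum>h2\<in>Bidx n d. co3 n d q h (0,0) h2 (n-1,0) * (if fst c = (0,1) then pathmul n d h2 g (snd c) else 0))
    + (\<Sum>h2\<in>Bidx n d. co3 n d q h (0,1) h2 (n-1,0) * (if fst c = (1,0) then pathmul n d h2 g (snd c) else 0))
    + (\<Sum>h2\<in>Bidx n d. co3 n d q h (0,0) h2 (n-1,1) * (if fst c = (0,0) then - inverse q * pathmul n d h2 g (snd c) else 0))"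
proof -
  let ?G1 = "\<lambda>h2. if fst c = (0,1) then pathmul n d h2 g (snd c) else 0"
  let ?G2 = "\<lambda>h2. if fst c = (1,0) then pathmul n d h2 g (snd c) else 0"
  let ?G3 = "\<lambda>h2. if fst c = (0,0) then - inverse q * pathmul n d h2 g (snd c) else 0"
  let ?B = "Bidx n d"
  have "dbprod n d q (0,0) h (0,1) g c = (\<Sum>h1\<in>?B. \<Sum>h2\<in>?B. \<Sum>h3\<in>?B.
      (if h1 = (0,0) \<and> h3 = (n-1,0) then co3 n d q h h1 h2 h3 * ?G1 h2 else 0)
    + (if h1 = (0,1) \<and> h3 = (n-1,0) then co3 n d q h h1 h2 h3 * ?G2 h2 else 0)
    + (if h1 = (0,0) \<and> h3 = (n-1,1) then co3 n d q h h1 h2 h3 * ?G3 h2 else 0))"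
    unfolding dbprod_counit[OF g] if_P[OF c]
  proof (intro sum3_cong)
    fix h1 h2 h3 assume h: "h1 \<in> Bidx n d" "h2 \<in> Bidx n d" "h3 \<in> Bidx n d"
    show "co3 n d q h h1 h2 h3 * sandwich h3 h1 (0, 1) (fst c) * pathmul n d h2 g (snd c) =
      (if h1 = (0,0) \<and> h3 = (n-1,0) then co3 n d q h h1 h2 h3 * ?G1 h2 else 0)
    + (if h1 = (0,1) \<and> h3 = (n-1,0) then co3 n d q h h1 h2 h3 * ?G2 h2 else 0)
    + (if h1 = (0,0) \<and> h3 = (n-1,1) then co3 n d q h h1 h2 h3 * ?G3 h2 else 0)"
      unfolding sandwich_X[OF h(3) h(1) c] by (auto simp: algebra_simps)
  qed
  also have "\<dots> = (\<Sum>h2\<in>?B. co3 n d q h (0,0) h2 (n-1,0) * ?G1 h2)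
     + (\<Sum>h2\<in>?B. co3 n d q h (0,1) h2 (n-1,0) * ?G2 h2)
     + (\<Sum>h2\<in>?B. co3 n d q h (0,0) h2 (n-1,1) * ?G3 h2)"
    using d_ge_2 n_ge_2 by (simp only: sum.distrib, (subst sum3_delta, auto)+)
  finally show ?thesis .
qed

lemma dbprod_counit_X:
  assumes lm: "(l, m) \<in> Bidx n d" and g: "g \<in> Bidx n d"
  shows "dbprod n d q (0,0) (l,m) (0,1) g c =
      bv (0,1) (fst c) * (q ^ (m * (n - 1)) * pathmul n d ((l + 1) mod n, m) g (snd c))
    + (if 1 \<le> m then bv (1,0) (fst c) * (q ^ (m * (n - 1)) * (qint q m * q ^ (l + 1)) * pathmul n d ((l + 1) mod n, m - 1) g (snd c)) else 0)
    + (if 1 \<le> m then bv (0,0) (fst c) * (- inverse q * (qint q m * q ^ ((m - 1) * (n - 1))) * pathmul n d ((l + 1) mod n, m - 1) g (snd c)) else 0)"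
proof (cases "fst c \<in> Bidx n d")
  case True
  let ?G1 = "\<lambda>h2. if fst c = (0,1) then pathmul n d h2 g (snd c) else 0"
  let ?G2 = "\<lambda>h2. if fst c = (1,0) then pathmul n d h2 g (snd c) else 0"
  let ?G3 = "\<lambda>h2. if fst c = (0,0) then - inverse q * pathmul n d h2 g (snd c) else 0"
  have i1: "(l + n - (0 + (n - 1)) mod n) mod n = (l + 1) mod n" using lm n_pos by simp
  have "(\<Sum>h2\<in>Bidx n d. co3 n d q (l,m) (0,0) h2 (n-1,0) * ?G1 h2)
      = bv (0,1) (fst c) * (q ^ (m * (n - 1)) * pathmul n d ((l + 1) mod n, m) g (snd c))"
    using sum_co3[OF lm, of 0 0 "n-1" 0 ?G1] d_pos n_ge_2 lm unfolding i1 by (simp add: bv_def mult.commute)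
  moreover have "(\<Sum>h2\<in>Bidx n d. co3 n d q (l,m) (0,1) h2 (n-1,0) * ?G2 h2)
      = (if 1 \<le> m then bv (1,0) (fst c) * (q ^ (m * (n - 1)) * (qint q m * q ^ (l + 1)) * pathmul n d ((l + 1) mod n, m - 1) g (snd c)) else 0)"
    using sum_co3[OF lm, of 0 1 "n-1" 0 ?G2] d_ge_2 n_ge_2 lm qbinom_1[of q m] unfolding i1
    by (simp add: bv_def power_mod_n algebra_simps)
  moreover have "(\<Sum>h2\<in>Bidx n d. co3 n d q (l,m) (0,0) h2 (n-1,1) * ?G3 h2)
      = (if 1 \<le> m then bv (0,0) (fst c) * (- inverse q * (qint q m * q ^ ((m - 1) * (n - 1))) * pathmul n d ((l + 1) mod n, m - 1) g (snd c)) else 0)"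
  proof (cases m)
    case (Suc k)
    then have "qbinom q m (m - 1) = qint q m" using qbinom_Suc_self by simp
    then show ?thesis using sum_co3[OF lm, of 0 0 "n-1" 1 ?G3] d_ge_2 n_ge_2 lm Suc unfolding i1 by (simp add: bv_def algebra_simps)
  qed (use sum_co3[OF lm, of 0 0 "n-1" 1 ?G3] d_ge_2 n_ge_2 lm in simp)
  ultimately show ?thesis unfolding dbprod_counit_X_sums[OF g True] by simp
next
  case False
  then have "fst c \<noteq> (1,0)" "fst c \<noteq> (0,1)" "fst c \<noteq> (0,0)" using d_ge_2 n_ge_2 by auto
  then show ?thesis unfolding dbprod_counit[OF g] using False by (simp add: bv_def)
qed

subsection \<open>The defining relations and the basis\<close>

lemma powD_G: "powD n d q (Gd n) i = tens (bv (i mod n, 0)) (oneL n)"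
proof (induction i)
  case 0 then show ?case by (simp add: oneD_def)
next
  case (Suc i)
  have c: "conv n d q (bv (1,0)) (bv (i mod n, 0)) = bv (Suc i mod n, 0)"
  proof
    fix x :: "nat \<times> nat"
    obtain x1 x2 where x: "x = (x1, x2)" by fastforce
    have i1: "(1, 0) \<in> Bidx n d" "(i mod n, 0) \<in> Bidx n d" using n_ge_2 d_pos n_pos by auto
    have e: "(1 + i mod n) mod n = Suc i mod n" by (simp add: mod_Suc_eq)
    show "conv n d q (bv (1,0)) (bv (i mod n, 0)) x = bv (Suc i mod n, 0) x"
      unfolding conv_bv[OF i1] using x i1 e n_pos d_pos by (auto simp: copath_coeff_def bv_def)
  qed
  show ?case by (simp only: powD.simps(2) Suc.IH) (simp only: Gd_def mulD_tens_oneL[OF oneL_in_Vspace[OF d_pos]] c)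
qed

lemma powD_X: "j < d \<Longrightarrow> powD n d q (Xd n) j = tens (\<lambda>x. qfact q j * bv (0, j) x) (oneL n)"
proof (induction j)
  case 0 then show ?case by (simp add: oneD_def)
next
  case (Suc j)
  have c: "conv n d q (bv (0,1)) (bv (0, j)) = (\<lambda>x. qint q (Suc j) * bv (0, Suc j) x)"
  proof
    fix x :: "nat \<times> nat"
    obtain x1 x2 where x: "x = (x1, x2)" by fastforce
    have i1: "(0, 1) \<in> Bidx n d" "(0, j) \<in> Bidx n d" using Suc.prems d_ge_2 n_pos by auto
    have qb: "qbinom q (Suc j) (Suc 0) = qint q (Suc j)" using qbinom_1[of q "Suc j"] by simp
    show "conv n d q (bv (0,1)) (bv (0, j)) x = qint q (Suc j) * bv (0, Suc j) x"
      unfolding conv_bv[OF i1] using x i1 n_pos Suc.prems qb by (auto simp: copath_coeff_def bv_def)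
  qed
  have "powD n d q (Xd n) (Suc j) = tens (conv n d q (bv (0,1)) (\<lambda>x. qfact q j * bv (0, j) x)) (oneL n)"
    using Suc by (simp only: powD.simps(2)) (simp only: Xd_def mulD_tens_oneL[OF oneL_in_Vspace[OF d_pos]])
  also have "\<dots> = tens (\<lambda>x. qfact q (Suc j) * bv (0, Suc j) x) (oneL n)"
    unfolding conv_scale_right c by (simp add: algebra_simps)
  finally show ?case .
qed

lemma powD_X_d: "powD n d q (Xd n) d = (\<lambda>_. 0)"
proof -
  obtain j where j: "d = Suc j" using d_ge_2 by (cases d) auto
  have jd: "j < d" using j by simp
  have c: "conv n d q (bv (0,1)) (bv (0, j)) = (\<lambda>x. 0)"
  proof
    fix x :: "nat \<times> nat"
    obtain x1 x2 where x: "x = (x1, x2)" by fastforce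
    have i1: "(0, 1) \<in> Bidx n d" "(0, j) \<in> Bidx n d" using jd d_ge_2 n_pos by auto
    show "conv n d q (bv (0,1)) (bv (0, j)) x = 0"
    proof -
      have dj: "d \<le> 1 + j" using j by simp
      show ?thesis unfolding conv_bv[OF i1] using x dj by (auto simp: copath_coeff_def)
    qed
  qed
  have "powD n d q (Xd n) d = powD n d q (Xd n) (Suc j)" by (simp only: j[symmetric])
  also have "\<dots> = tens (conv n d q (bv (0,1)) (\<lambda>x. qfact q j * bv (0, j) x)) (oneL n)"
    by (simp only: powD.simps(2) powD_X[OF jd]) (simp only: Xd_def mulD_tens_oneL[OF oneL_in_Vspace[OF d_pos]])
  also have "\<dots> = (\<lambda>_. 0)"
    unfolding conv_scale_right c by (simp add: tens_def)
  finally show ?thesis .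
qed

lemma G_X_commute: "mulD n d q (Gd n) (Xd n) = (\<lambda>c. inverse q * mulD n d q (Xd n) (Gd n) c)"
proof -
  have i1: "(1, 0) \<in> Bidx n d" "(0, 1) \<in> Bidx n d" using n_ge_2 d_ge_2 by auto
  have m1: "1 mod n = 1" using n_ge_2 by simp
  have c1: "conv n d q (bv (1,0)) (bv (0,1)) = bv (1,1)"
  proof
    fix x :: "nat \<times> nat"
    obtain x1 x2 where x: "x = (x1, x2)" by fastforce
    show "conv n d q (bv (1,0)) (bv (0,1)) x = bv (1,1) x"
      unfolding conv_bv[OF i1] using x m1 n_ge_2 d_ge_2 by (auto simp: copath_coeff_def bv_def)
  qed
  have c2: "conv n d q (bv (0,1)) (bv (1,0)) = (\<lambda>x. q * bv (1,1) x)"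
  proof
    fix x :: "nat \<times> nat"
    obtain x1 x2 where x: "x = (x1, x2)" by fastforce
    show "conv n d q (bv (0,1)) (bv (1,0)) x = q * bv (1,1) x"
      unfolding conv_bv[OF i1(2,1)] using x m1 n_ge_2 d_ge_2 by (auto simp: copath_coeff_def bv_def)
  qed
  show ?thesis unfolding Gd_def Xd_def mulD_tens_oneL[OF oneL_in_Vspace[OF d_pos]] c1 c2 tens_scale_left
    by (rule ext) (simp add: q_nonzero mult.assoc[symmetric])
qed

lemma power_q_n_minus_1: "q ^ (m * (n - 1)) = inverse q ^ m"
proof -
  have "q * q ^ (n - 1) = 1" using q_pow_n n_pos by (metis power_Suc Suc_diff_1)
  then have h: "q ^ (n - 1) = inverse q" using q_nonzero by (metis inverse_unique mult.commute)
  have "q ^ (m * (n - 1)) = q ^ ((n - 1) * m)" by (simp add: mult.commute)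
  also have "\<dots> = (q ^ (n - 1)) ^ m" by (rule power_mult)
  finally show ?thesis using h by simp
qed

lemma gamD_eq: "l < n \<Longrightarrow> gamD n l m = tens (bv (0,0)) (bv (l, m))"
  by (simp add: gamD_def)

lemma gamD_gamD:
  assumes "l < n" "m < d" "l' < n" "m' < d"
  shows "mulD n d q (gamD n l m) (gamD n l' m') = tens (bv (0, 0)) (pathmul n d (l, m) (l', m'))"
proof
  fix c :: "(nat \<times> nat) \<times> (nat \<times> nat)"
  have i: "(0,0) \<in> Bidx n d" "(l, m) \<in> Bidx n d" "(l', m') \<in> Bidx n d" using assms n_pos d_pos by auto
  show "mulD n d q (gamD n l m) (gamD n l' m') c = tens (bv (0, 0)) (pathmul n d (l, m) (l', m')) c"
    unfolding gamD_eq[OF assms(1)] gamD_eq[OF assms(3)] mulD_tens_bv[OF i(1,2,1,3)] dbprod_counit_counit[OF i(2,3)]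
    by (simp add: tens_def)
qed

lemma G_gamD:
  assumes "l < n" "m < d"
  shows "mulD n d q (Gd n) (gamD n l m) = tens (bv (1,0)) (bv (l, m))"
proof -
  have i: "(l, m) \<in> Bidx n d" using assms by simp
  have c: "conv n d q (bv (1,0)) (bv (0,0)) = bv (1, 0)"
  proof
    fix x :: "nat \<times> nat"
    show "conv n d q (bv (1,0)) (bv (0,0)) x = bv (1,0) x" unfolding conv_counit_right using n_ge_2 d_pos by (auto simp: bv_def)
  qed
  show ?thesis unfolding gamD_eq[OF assms(1)] Gd_def mulD_tens_oneL[OF bv_in_Vspace[OF i]] c by (rule refl)
qed

lemma X_gamD:
  assumes "l < n" "m < d"
  shows "mulD n d q (Xd n) (gamD n l m) = tens (bv (0,1)) (bv (l, m))"
proof -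
  have i: "(l, m) \<in> Bidx n d" using assms by simp
  have c: "conv n d q (bv (0,1)) (bv (0,0)) = bv (0, 1)"
  proof
    fix x :: "nat \<times> nat"
    show "conv n d q (bv (0,1)) (bv (0,0)) x = bv (0,1) x" unfolding conv_counit_right using n_pos d_ge_2 by (auto simp: bv_def)
  qed
  show ?thesis unfolding gamD_eq[OF assms(1)] Xd_def mulD_tens_oneL[OF bv_in_Vspace[OF i]] c by (rule refl)
qed

lemma gamD_G:
  assumes "l < n" "m < d"
  shows "mulD n d q (gamD n l m) (Gd n) = (\<lambda>c. inverse q ^ m * mulD n d q (Gd n) (gamD n l m) c)"
proof
  fix c :: "(nat \<times> nat) \<times> (nat \<times> nat)"
  have i: "(0,0) \<in> Bidx n d" "(l, m) \<in> Bidx n d" "(1, 0) \<in> Bidx n d" using assms n_ge_2 d_pos by auto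
  have "mulD n d q (gamD n l m) (Gd n) c = (\<Sum>g\<in>Bidx n d. oneL n g * dbprod n d q (0,0) (l,m) (1,0) g c)"
    unfolding gamD_eq[OF assms(1)] Gd_def mulD_tens_bv_oneL[OF i] by (rule refl)
  also have "\<dots> = (\<Sum>g\<in>Bidx n d. (bv (1,0) (fst c) * q ^ (m * (n - 1))) * (oneL n g * pathmul n d (l,m) g (snd c)))"
  proof (intro sum.cong refl)
    fix g assume g: "g \<in> Bidx n d"
    show "oneL n g * dbprod n d q (0,0) (l,m) (1,0) g c = (bv (1,0) (fst c) * q ^ (m * (n - 1))) * (oneL n g * pathmul n d (l,m) g (snd c))"
      unfolding dbprod_counit_G[OF i(2) g] by (simp only: mult_ac)
  qed
  also have "\<dots> = bv (1,0) (fst c) * q ^ (m * (n - 1)) * bv (l, m) (snd c)"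
    by (simp only: sum_distrib_left[symmetric] sum_oneL_pathmul[OF i(2)])
  also have "\<dots> = inverse q ^ m * mulD n d q (Gd n) (gamD n l m) c"
    unfolding G_gamD[OF assms] power_q_n_minus_1 by (simp add: tens_def)
  finally show "mulD n d q (gamD n l m) (Gd n) c = inverse q ^ m * mulD n d q (Gd n) (gamD n l m) c" .
qed

lemma gamD_X_apply:
  assumes "l < n" "m < d"
  shows "mulD n d q (gamD n l m) (Xd n) c =
      bv (0,1) (fst c) * q ^ (m * (n - 1)) * bv ((l + 1) mod n, m) (snd c)
    + ((if 1 \<le> m then bv (1,0) (fst c) * (q ^ (m * (n - 1)) * (qint q m * q ^ (l + 1))) else 0) * bv ((l + 1) mod n, m - 1) (snd c)
    + (if 1 \<le> m then bv (0,0) (fst c) * (- inverse q * (qint q m * q ^ ((m - 1) * (n - 1)))) else 0) * bv ((l + 1) mod n, m - 1) (snd c))"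
proof -
  have i: "(0,0) \<in> Bidx n d" "(l, m) \<in> Bidx n d" "(0, 1) \<in> Bidx n d" using assms n_pos d_ge_2 by auto
  let ?l1 = "(l + 1) mod n"
  have j: "(?l1, m) \<in> Bidx n d" "(?l1, m - 1) \<in> Bidx n d" using assms n_pos by auto
  let ?al = "bv (0,1) (fst c) * q ^ (m * (n - 1))"
  let ?be = "if 1 \<le> m then bv (1,0) (fst c) * (q ^ (m * (n - 1)) * (qint q m * q ^ (l + 1))) else 0"
  let ?ga = "if 1 \<le> m then bv (0,0) (fst c) * (- inverse q * (qint q m * q ^ ((m - 1) * (n - 1)))) else 0"
  have "mulD n d q (gamD n l m) (Xd n) c = (\<Sum>g\<in>Bidx n d. oneL n g * dbprod n d q (0,0) (l,m) (0,1) g c)"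
    unfolding gamD_eq[OF assms(1)] Xd_def mulD_tens_bv_oneL[OF i] by (rule refl)
  also have "\<dots> = (\<Sum>g\<in>Bidx n d. ?al * (oneL n g * pathmul n d (?l1, m) g (snd c))
       + (?be * (oneL n g * pathmul n d (?l1, m - 1) g (snd c)) + ?ga * (oneL n g * pathmul n d (?l1, m - 1) g (snd c))))"
  proof (intro sum.cong refl)
    fix g assume g: "g \<in> Bidx n d"
    show "oneL n g * dbprod n d q (0,0) (l,m) (0,1) g c = ?al * (oneL n g * pathmul n d (?l1, m) g (snd c))
       + (?be * (oneL n g * pathmul n d (?l1, m - 1) g (snd c)) + ?ga * (oneL n g * pathmul n d (?l1, m - 1) g (snd c)))"
      unfolding dbprod_counit_X[OF i(2) g] by (simp add: algebra_simps)
  qed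
  also have "\<dots> = ?al * bv (?l1, m) (snd c) + (?be * bv (?l1, m - 1) (snd c) + ?ga * bv (?l1, m - 1) (snd c))"
    by (simp only: sum.distrib sum_distrib_left[symmetric] sum_oneL_pathmul[OF j(1)] sum_oneL_pathmul[OF j(2)])
  finally show ?thesis .
qed

lemma gamD_X:
  assumes "l < n" "m < d"
  shows "mulD n d q (gamD n l m) (Xd n) =
          (\<lambda>c. inverse q ^ m * mulD n d q (Xd n) (gamD n (l + 1) m) c
             - inverse q ^ m * qint q m * gamD n (l + 1) (m - 1) c
             + q ^ (l + 1) * inverse q ^ m * qint q m * mulD n d q (Gd n) (gamD n (l + 1) (m - 1)) c)"
proof
  fix c :: "(nat \<times> nat) \<times> (nat \<times> nat)"
  let ?l1 = "(l + 1) mod n"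
  have l1: "?l1 < n" using n_pos by simp
  have g1: "gamD n (l + 1) m = tens (bv (0,0)) (bv (?l1, m))" "gamD n (l + 1) (m - 1) = tens (bv (0,0)) (bv (?l1, m - 1))"
    by (simp_all add: gamD_def)
  have X1: "mulD n d q (Xd n) (gamD n (l + 1) m) = tens (bv (0,1)) (bv (?l1, m))"
    using X_gamD[OF l1 assms(2)] by (simp add: gamD_def)
  have G1: "mulD n d q (Gd n) (gamD n (l + 1) (m - 1)) = tens (bv (1,0)) (bv (?l1, m - 1))"
    using G_gamD[OF l1, of "m - 1"] assms(2) by (simp add: gamD_def)
  show "mulD n d q (gamD n l m) (Xd n) c = inverse q ^ m * mulD n d q (Xd n) (gamD n (l + 1) m) c
             - inverse q ^ m * qint q m * gamD n (l + 1) (m - 1) c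
             + q ^ (l + 1) * inverse q ^ m * qint q m * mulD n d q (Gd n) (gamD n (l + 1) (m - 1)) c"
  proof (cases m)
    case 0
    then show ?thesis unfolding gamD_X_apply[OF assms] X1 G1 unfolding g1 power_q_n_minus_1
      by (simp add: tens_def qint_def)
  next
    case (Suc k)
    have "q ^ (k * (n - 1)) = inverse q ^ k" by (rule power_q_n_minus_1)
    then show ?thesis unfolding gamD_X_apply[OF assms] X1 G1 unfolding g1 power_q_n_minus_1 using Suc
      by (simp add: tens_def algebra_simps)
  qed
qed

lemma basisD_eq:
  assumes "i < n" "j < d" "l < n" "m < d"
  shows "basisD n d q (i, j, l, m) = (\<lambda>c. qfact q j * (if c = ((i, j), (l, m)) then 1 else 0))"
proof -
  have i1: "(i, 0) \<in> Bidx n d" "(0, j) \<in> Bidx n d" using assms n_pos by auto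
  have c: "conv n d q (bv (i, 0)) (bv (0, j)) = bv (i, j)"
  proof
    fix x :: "nat \<times> nat"
    obtain x1 x2 where x: "x = (x1, x2)" by fastforce
    show "conv n d q (bv (i, 0)) (bv (0, j)) x = bv (i, j) x"
      unfolding conv_bv[OF i1] using x assms by (auto simp: copath_coeff_def bv_def)
  qed
  have GX: "mulD n d q (powD n d q (Gd n) i) (powD n d q (Xd n) j) = tens (\<lambda>x. qfact q j * bv (i, j) x) (oneL n)"
  proof -
    have im: "i mod n = i" using assms by simp
    show ?thesis unfolding powD_G powD_X[OF assms(2)] im mulD_tens_oneL[OF oneL_in_Vspace[OF d_pos]] conv_scale_right c by (rule refl)
  qed
  have lm: "(l mod n, m) \<in> Bidx n d" "(l mod n) = l" using assms by auto
  have c2: "conv n d q (\<lambda>x. qfact q j * bv (i, j) x) (bv (0, 0)) = (\<lambda>x. qfact q j * bv (i, j) x)"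
  proof
    fix x :: "nat \<times> nat"
    show "conv n d q (\<lambda>x. qfact q j * bv (i, j) x) (bv (0, 0)) x = qfact q j * bv (i, j) x"
      unfolding conv_counit_right using assms by (auto simp: bv_def)
  qed
  have gm: "gamD n l m = tens (bv (0,0)) (bv (l, m))" using assms by (simp add: gamD_def)
  have lm': "(l, m) \<in> Bidx n d" using assms by simp
  show ?thesis unfolding basisD_def prod.case GX gm mulD_tens_oneL[OF bv_in_Vspace[OF lm']] c2
    by (auto simp: tens_def bv_def)
qed

lemma sum_basisD:
  "(\<Sum>idx \<in> {0..<n} \<times> {0..<d} \<times> {0..<n} \<times> {0..<d}. f idx * basisD n d q idx c)
   = (if c \<in> Bidx n d \<times> Bidx n d then f (fst (fst c), snd (fst c), fst (snd c), snd (snd c)) * qfact q (snd (fst c)) else 0)"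
proof -
  let ?S = "{0..<n} \<times> {0..<d} \<times> {0..<n} \<times> {0..<d}"
  let ?ic = "(fst (fst c), snd (fst c), fst (snd c), snd (snd c))"
  have "(\<Sum>idx \<in> ?S. f idx * basisD n d q idx c) = (\<Sum>idx \<in> ?S. if idx = ?ic then f ?ic * qfact q (snd (fst c)) else 0)"
  proof (intro sum.cong refl)
    fix idx assume idx: "idx \<in> ?S"
    obtain i j l m where ii: "idx = (i, j, l, m)" by (metis prod.collapse)
    have lt: "i < n" "j < d" "l < n" "m < d" using idx ii by auto
    show "f idx * basisD n d q idx c = (if idx = ?ic then f ?ic * qfact q (snd (fst c)) else 0)"
      unfolding ii basisD_eq[OF lt] by (cases c) auto
  qed
  also have "\<dots> = (if ?ic \<in> ?S then f ?ic * qfact q (snd (fst c)) else 0)" by (simp add: sum.delta)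
  also have "?ic \<in> ?S \<longleftrightarrow> c \<in> Bidx n d \<times> Bidx n d" by (cases c) auto
  finally show ?thesis by simp
qed

lemma basisD_expansion_iff:
  assumes qprim: "\<forall>k. 0 < k \<and> k < d \<longrightarrow> q ^ k \<noteq> 1" and P: "P \<in> Dspace n d"
    and f: "\<forall>idx. idx \<notin> {0..<n} \<times> {0..<d} \<times> {0..<n} \<times> {0..<d} \<longrightarrow> f idx = 0"
  shows "P = (\<lambda>c. \<Sum>idx \<in> {0..<n} \<times> {0..<d} \<times> {0..<n} \<times> {0..<d}. f idx * basisD n d q idx c)
    \<longleftrightarrow> (\<forall>i j l m. f (i, j, l, m) = (if i < n \<and> j < d \<and> l < n \<and> m < d then P ((i, j), (l, m)) / qfact q j else 0))"
    (is "P = ?E \<longleftrightarrow> ?coords")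
proof
  assume "P = ?E"
  then have "P ((i, j), (l, m)) = f (i, j, l, m) * qfact q j" if "i < n" "j < d" "l < n" "m < d" for i j l m
    using that sum_basisD[of f "((i, j), (l, m))"] by simp
  then show ?coords using f qfact_nonzero[OF qprim] by (auto simp: field_simps)
next
  assume coords: ?coords
  show "P = ?E"
  proof
    fix c :: "(nat \<times> nat) \<times> (nat \<times> nat)"
    obtain i j l m where c: "c = ((i, j), (l, m))" by (metis prod.collapse)
    show "P c = ?E c"
    proof (cases "c \<in> Bidx n d \<times> Bidx n d")
      case True
      then show ?thesis using c coords qfact_nonzero[OF qprim, of j] by (simp add: sum_basisD)
    next
      case False
      then show ?thesis using P unfolding c by (auto simp: sum_basisD Dspace_def)
    qed
  qed
qed

lemma basisD_unique_coordinates: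
  assumes qprim: "\<forall>k. 0 < k \<and> k < d \<longrightarrow> q ^ k \<noteq> 1"
  shows "\<forall>P \<in> Dspace n d. \<exists>!f. (\<forall>idx. idx \<notin> {0..<n} \<times> {0..<d} \<times> {0..<n} \<times> {0..<d} \<longrightarrow> f idx = 0)
        \<and> P = (\<lambda>c. \<Sum>idx \<in> {0..<n} \<times> {0..<d} \<times> {0..<n} \<times> {0..<d}. f idx * basisD n d q idx c)"
proof
  fix P :: "'a ten" assume P: "P \<in> Dspace n d"
  let ?f = "\<lambda>(i, j, l, m). if i < n \<and> j < d \<and> l < n \<and> m < d then P ((i, j), (l, m)) / qfact q j else 0"
  have supp: "\<forall>idx. idx \<notin> {0..<n} \<times> {0..<d} \<times> {0..<n} \<times> {0..<d} \<longrightarrow> ?f idx = 0" by auto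
  show "\<exists>!f. (\<forall>idx. idx \<notin> {0..<n} \<times> {0..<d} \<times> {0..<n} \<times> {0..<d} \<longrightarrow> f idx = 0)
        \<and> P = (\<lambda>c. \<Sum>idx \<in> {0..<n} \<times> {0..<d} \<times> {0..<n} \<times> {0..<d}. f idx * basisD n d q idx c)"
  proof (rule ex1I[of _ ?f])
    show "(\<forall>idx. idx \<notin> {0..<n} \<times> {0..<d} \<times> {0..<n} \<times> {0..<d} \<longrightarrow> ?f idx = 0)
        \<and> P = (\<lambda>c. \<Sum>idx \<in> {0..<n} \<times> {0..<d} \<times> {0..<n} \<times> {0..<d}. ?f idx * basisD n d q idx c)"
      using supp basisD_expansion_iff[OF qprim P supp] by simp
  next
    fix g
    assume "(\<forall>idx. idx \<notin> {0..<n} \<times> {0..<d} \<times> {0..<n} \<times> {0..<d} \<longrightarrow> g idx = 0)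
        \<and> P = (\<lambda>c. \<Sum>idx \<in> {0..<n} \<times> {0..<d} \<times> {0..<n} \<times> {0..<d}. g idx * basisD n d q idx c)"
    then show "g = ?f" using basisD_expansion_iff[OF qprim P, of g] by (auto intro!: ext)
  qed
qed

end

theorem mainTheorem1:
  fixes q :: "'a::field" and n d :: nat
  assumes alg_closed: "\<forall>p :: 'a poly. degree p > 0 \<longrightarrow> (\<exists>x. poly p x = 0)"
    and d2: "d \<ge> 2" and dn: "d dvd n" and char: "(of_nat n :: 'a) \<noteq> 0"
    and qd: "q ^ d = 1" and qprim: "\<forall>k. 0 < k \<and> k < d \<longrightarrow> q ^ k \<noteq> 1"
  shows
    "(\<forall>P \<in> Dspace n d. \<exists>!f. (\<forall>idx. idx \<notin> {0..<n} \<times> {0..<d} \<times> {0..<n} \<times> {0..<d} \<longrightarrow> f idx = 0)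
        \<and> P = (\<lambda>c. \<Sum>idx \<in> {0..<n} \<times> {0..<d} \<times> {0..<n} \<times> {0..<d}. f idx * basisD n d q idx c))
   \<and> powD n d q (Gd n) n = oneD n
   \<and> powD n d q (Xd n) d = (\<lambda>_. 0)
   \<and> mulD n d q (Gd n) (Xd n) = (\<lambda>c. inverse q * mulD n d q (Xd n) (Gd n) c)
   \<and> (\<forall>l m l' m'. l < n \<and> m < d \<and> l' < n \<and> m' < d \<longrightarrow>
        mulD n d q (gamD n l m) (gamD n l' m') = tens (bv (0, 0)) (pathmul n d (l, m) (l', m')))
   \<and> (\<forall>l m. l < n \<and> m < d \<longrightarrow>
        mulD n d q (gamD n l m) (Gd n) = (\<lambda>c. inverse q ^ m * mulD n d q (Gd n) (gamD n l m) c))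
   \<and> (\<forall>l m. l < n \<and> m < d \<longrightarrow>
        mulD n d q (gamD n l m) (Xd n) =
          (\<lambda>c. inverse q ^ m * mulD n d q (Xd n) (gamD n (l + 1) m) c
             - inverse q ^ m * qint q m * gamD n (l + 1) (m - 1) c
             + q ^ (l + 1) * inverse q ^ m * qint q m * mulD n d q (Gd n) (gamD n (l + 1) (m - 1)) c))"
proof -
  have n_pos: "0 < n" using char by (cases n) auto
  have "d \<le> n" using dn n_pos by (simp add: dvd_imp_le)
  moreover have "q ^ n = 1" using dn qd by (auto elim!: dvdE simp: power_mult)
  ultimately interpret cyclic_double n d q using d2 by unfold_locales
  have "powD n d q (Gd n) n = oneD n" by (simp add: powD_G oneD_def)
  then show ?thesis
    using basisD_unique_coordinates[OF qprim] powD_X_d G_X_commute gamD_gamD gamD_G gamD_X by blast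
qed

end
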